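(* The metric space $(\mathcal{I}_\alpha,d_\alpha)$ is path-connected and separable.
   Context: Fix $\alpha\in(0,1)$. An interval partition is a set $\beta$ of disjoint open subintervals (blocks) of some interval $[0,L]$ that cover $[0,L]$ up to a Lebesgue-null set (the empty partition with $L=0$ included); write $\|\beta\|:=L$ and $\mathrm{Leb}(U)$ for the length of a block $U$. $\beta$ has the $\alpha$-diversity property if for every $t\in[0,\|\beta\|]$ the limit $\mathscr{D}_\beta(t):=\Gamma(1-\alpha)\lim_{h\downarrow0}h^\alpha\#\{(a,b)\in\beta\colon b-a>h,\ b\le t\}$ exists; $\mathcal{I}_\alpha$ is the set of such partitions. For $U\in\beta$, $\mathscr{D}_\beta(U):=\mathscr{D}_\beta(t)$ for $t\in U$; $\mathscr{D}_\beta(\infty):=\mathscr{D}_\beta(\|\beta\|)$. A correspondence between $\beta,\gamma\in\mathcal{I}_\alpha$ is a finite sequence $(U_j,V_j)_{j\in[n]}$, $n\ge0$, of pairs in $\beta\times\gamma$ with $(U_j)_j$ and $(V_j)_j$ each strictly increasing in left-to-right order. Its $\alpha$-distortion is the maximum of $\sum_{j}|\mathrm{Leb}(U_j)-\mathrm{Leb}(V_j)|+\|\beta\|-\sum_j\mathrm{Leb}(U_j)$, $\sum_{j}|\mathrm{Leb}(U_j)-\mathrm{Leb}(V_j)|+\|\gamma\|-\sum_j\mathrm{Leb}(V_j)$, $\sup_j|\mathscr{D}_\beta(U_j)-\mathscr{D}_\gamma(V_j)|$ and $|\mathscr{D}_\beta(\infty)-\mathscr{D}_\gamma(\infty)|$.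 $d_\alpha(\beta,\gamma)$ is the infimum of the $\alpha$-distortion over all correspondences. *)

theory Defs
  imports "HOL-Analysis.Analysis"
begin

text \<open>A block (a,b) stands for the open interval {a<..<b}. An interval partition of [0,L]
 is a set of pairwise disjoint nonempty open subintervals of [0,L] covering [0,L] up to a
 Lebesgue-null set.\<close>

definition IP_of :: "(real \<times> real) set \<Rightarrow> real \<Rightarrow> bool" where
  "IP_of \<beta> L \<longleftrightarrow> 0 \<le> L \<and>
     (\<forall>(a,b)\<in>\<beta>. 0 \<le> a \<and> a < b \<and> b \<le> L) \<and>
     (\<forall>U\<in>\<beta>. \<forall>V\<in>\<beta>. U \<noteq> V \<longrightarrow> {fst U<..<snd U} \<inter> {fst V<..<snd V} = {}) \<and>
     {0..L} - (\<Union>(a,b)\<in>\<beta>. {a<..<b}) \<in> null_sets lborel"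

definition interval_partition :: "(real \<times> real) set \<Rightarrow> bool" where
  "interval_partition \<beta> \<longleftrightarrow> (\<exists>L. IP_of \<beta> L)"

text \<open>The total length ||beta|| (the L with IP_of beta L; it is unique).\<close>
definition IPlen :: "(real \<times> real) set \<Rightarrow> real" where
  "IPlen \<beta> = (THE L. IP_of \<beta> L)"

definition blen :: "real \<times> real \<Rightarrow> real" where
  "blen U = snd U - fst U"

definition div_count :: "(real \<times> real) set \<Rightarrow> real \<Rightarrow> real \<Rightarrow> real" where
  "div_count \<beta> t h = real (card {(a,b)\<in>\<beta>. b - a > h \<and> b \<le> t})"

definition has_diversity :: "real \<Rightarrow> (real \<times> real) set \<Rightarrow> bool" where
  "has_diversity \<alpha> \<beta> \<longleftrightarrow> (\<forall>t\<in>{0..IPlen \<beta>}.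
      \<exists>l. ((\<lambda>h. h powr \<alpha> * div_count \<beta> t h) \<longlongrightarrow> l) (at_right 0))"

definition diversity :: "real \<Rightarrow> (real \<times> real) set \<Rightarrow> real \<Rightarrow> real" where
  "diversity \<alpha> \<beta> t = Gamma (1 - \<alpha>) * Lim (at_right 0) (\<lambda>h. h powr \<alpha> * div_count \<beta> t h)"

text \<open>Diversity of a block U: value at any point of U (we take the midpoint);
  diversity at infinity: value at ||beta||.\<close>
definition div_block :: "real \<Rightarrow> (real \<times> real) set \<Rightarrow> real \<times> real \<Rightarrow> real" where
  "div_block \<alpha> \<beta> U = diversity \<alpha> \<beta> ((fst U + snd U) / 2)"

definition div_inf :: "real \<Rightarrow> (real \<times> real) set \<Rightarrow> real" where
  "div_inf \<alpha> \<beta> = diversity \<alpha> \<beta> (IPlen \<beta>)"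

definition IPalpha :: "real \<Rightarrow> (real \<times> real) set set" where
  "IPalpha \<alpha> = {\<beta>. interval_partition \<beta> \<and> has_diversity \<alpha> \<beta>}"

definition correspondence ::
  "(real \<times> real) set \<Rightarrow> (real \<times> real) set \<Rightarrow> ((real \<times> real) \<times> (real \<times> real)) list \<Rightarrow> bool" where
  "correspondence \<beta> \<gamma> \<sigma> \<longleftrightarrow> (\<forall>(U,V)\<in>set \<sigma>. U \<in> \<beta> \<and> V \<in> \<gamma>) \<and>
     sorted_wrt (\<lambda>(U,V) (U',V'). fst U < fst U' \<and> fst V < fst V') \<sigma>"

definition distortion ::
  "real \<Rightarrow> (real \<times> real) set \<Rightarrow> (real \<times> real) set \<Rightarrow> ((real \<times> real) \<times> (real \<times> real)) list \<Rightarrow> real" where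
  "distortion \<alpha> \<beta> \<gamma> \<sigma> = Max (
     {(\<Sum>(U,V)\<leftarrow>\<sigma>. \<bar>blen U - blen V\<bar>) + IPlen \<beta> - (\<Sum>(U,V)\<leftarrow>\<sigma>. blen U),
      (\<Sum>(U,V)\<leftarrow>\<sigma>. \<bar>blen U - blen V\<bar>) + IPlen \<gamma> - (\<Sum>(U,V)\<leftarrow>\<sigma>. blen V),
      \<bar>div_inf \<alpha> \<beta> - div_inf \<alpha> \<gamma>\<bar>}
     \<union> (\<lambda>(U,V). \<bar>div_block \<alpha> \<beta> U - div_block \<alpha> \<gamma> V\<bar>) ` set \<sigma>)"

definition d_alpha :: "real \<Rightarrow> (real \<times> real) set \<Rightarrow> (real \<times> real) set \<Rightarrow> real" where
  "d_alpha \<alpha> \<beta> \<gamma> = Inf {distortion \<alpha> \<beta> \<gamma> \<sigma> | \<sigma>. correspondence \<beta> \<gamma> \<sigma>}"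

end

theory Submission
  imports Defs
begin

text \<open>\<open>d_alpha\<close> is an infimum of distortions of matchings, i.e. finite order-preserving sets of pairs
  of blocks. Reversing a matching gives symmetry, composing two matchings through the blocks of the
  middle partition gives the triangle inequality, and if \<open>d_alpha \<alpha> \<beta> \<gamma> = 0\<close> then every block of
  \<open>\<beta>\<close> is arbitrarily close to blocks of \<open>\<gamma>\<close>, hence is one of them.

  Multiplying all blocks of \<open>\<beta>\<close> by \<open>s\<close> and by \<open>s'\<close> in \<open>(0, 1]\<close> gives partitions at distance at
  most \<open>\<bar>s - s'\<bar> * IPlen \<beta> + \<bar>s powr \<alpha> - s' powr \<alpha>\<bar> * div_inf \<alpha> \<beta>\<close>, which also tends to the
  distance from the empty partition as \<open>s' \<rightarrow> 0\<close>; so every partition is joined to the empty one.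

  For separability, a "gadget" with blocks of lengths \<open>(k + 1) powr (-1/\<alpha>)\<close> has finite length
  but diversity \<open>Gamma (1 - \<alpha>)\<close>, all of it at its right end. Scaled by a small \<open>c\<close> it adds the
  diversity \<open>c powr \<alpha> * Gamma (1 - \<alpha>)\<close> at the cost of length proportional to \<open>c\<close>. Taking finitely
  many blocks of \<open>\<beta>\<close> carrying most of its length, replacing their lengths by rationals and
  inserting scaled gadgets between them to reproduce the diversities gives partitions described by
  countably many rational data that approximate \<open>\<beta>\<close> arbitrarily well.\<close>

section \<open>Interval partitions\<close>

definition block_ivl :: "real \<times> real \<Rightarrow> real set" where
  "block_ivl U = {fst U<..<snd U}"

lemma open_block_ivl [simp]: "open (block_ivl U)"
  by (simp add: block_ivl_def)

lemma Union_block_ivl_sets [measurable]: "(\<Union>U\<in>F. block_ivl U) \<in> sets borel"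
  by (intro borel_open) auto

lemma measure_block_ivl: "fst U \<le> snd U \<Longrightarrow> measure lborel (block_ivl U) = blen U"
  by (simp add: block_ivl_def blen_def)

lemma emeasure_block_ivl_finite: "emeasure lborel (block_ivl U) \<noteq> \<infinity>"
  by (cases "fst U \<le> snd U") (auto simp: block_ivl_def)

lemma IP_of_iff:
  "IP_of \<beta> L \<longleftrightarrow> 0 \<le> L \<and> (\<forall>U\<in>\<beta>. 0 \<le> fst U \<and> fst U < snd U \<and> snd U \<le> L) \<and>
     (\<forall>U\<in>\<beta>. \<forall>V\<in>\<beta>. U \<noteq> V \<longrightarrow> block_ivl U \<inter> block_ivl V = {}) \<and>
     {0..L} - (\<Union>U\<in>\<beta>. block_ivl U) \<in> null_sets lborel"
proof -
  have "(\<Union>(a,b)\<in>\<beta>. {a<..<b}) = (\<Union>U\<in>\<beta>. block_ivl U)" by (auto simp: block_ivl_def)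
  then show ?thesis unfolding IP_of_def block_ivl_def by (auto simp: split_beta)
qed

lemma IP_ofD:
  assumes "IP_of \<beta> L"
  shows "0 \<le> L" "\<And>U. U \<in> \<beta> \<Longrightarrow> 0 \<le> fst U \<and> fst U < snd U \<and> snd U \<le> L"
    "\<And>U V. U \<in> \<beta> \<Longrightarrow> V \<in> \<beta> \<Longrightarrow> U \<noteq> V \<Longrightarrow> block_ivl U \<inter> block_ivl V = {}"
    "{0..L} - (\<Union>U\<in>\<beta>. block_ivl U) \<in> null_sets lborel"
  using assms unfolding IP_of_iff by blast+

lemma IP_ofI:
  assumes "0 \<le> L" "\<And>U. U \<in> \<beta> \<Longrightarrow> 0 \<le> fst U \<and> fst U < snd U \<and> snd U \<le> L"
    "\<And>U V. U \<in> \<beta> \<Longrightarrow> V \<in> \<beta> \<Longrightarrow> U \<noteq> V \<Longrightarrow> block_ivl U \<inter> block_ivl V = {}"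
    "{0..L} - (\<Union>U\<in>\<beta>. block_ivl U) \<in> null_sets lborel"
  shows "IP_of \<beta> L"
  using assms unfolding IP_of_iff by blast

lemma IP_of_unique:
  assumes "IP_of \<beta> L" "IP_of \<beta> L'"
  shows "L = L'"
proof (rule ccontr)
  assume "L \<noteq> L'"
  then obtain A B where AB: "IP_of \<beta> A" "IP_of \<beta> B" "A < B"
    using assms by (metis linorder_neqE)
  have "{A<..<B} \<subseteq> {0..B} - (\<Union>U\<in>\<beta>. block_ivl U)"
    using IP_ofD(1,2)[OF AB(1)] by (force simp: block_ivl_def)
  then have "{A<..<B} \<in> null_sets lborel"
    using null_sets_subset[OF IP_ofD(4)[OF AB(2)]] by simp
  then show False using AB(3) by (simp add: null_sets_def)
qed

lemma IPlen_eqI: "IP_of \<beta> L \<Longrightarrow> IPlen \<beta> = L"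
  unfolding IPlen_def using IP_of_unique by blast

lemma IP_of_blen_pos: "IP_of \<beta> L \<Longrightarrow> U \<in> \<beta> \<Longrightarrow> 0 < blen U"
  using IP_ofD(2) by (simp add: blen_def)

lemma IP_of_fst_eq_imp_eq:
  assumes "IP_of \<beta> L" "U \<in> \<beta>" "V \<in> \<beta>" "fst U = fst V"
  shows "U = V"
proof (rule ccontr)
  assume "U \<noteq> V"
  define x where "x = fst U + min (blen U) (blen V) / 2"
  have "x \<in> block_ivl U \<inter> block_ivl V"
    using IP_ofD(2)[OF assms(1) assms(2)] IP_ofD(2)[OF assms(1) assms(3)] assms(4)
    by (auto simp: x_def block_ivl_def blen_def min_def field_simps)
  then show False using IP_ofD(3)[OF assms(1-3) \<open>U \<noteq> V\<close>] by blast
qed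

lemma IP_of_snd_le_fst:
  assumes "IP_of \<beta> L" "U \<in> \<beta>" "V \<in> \<beta>" "fst V < fst U"
  shows "snd V \<le> fst U"
proof (rule ccontr)
  assume "\<not> snd V \<le> fst U"
  define x where "x = fst U + min (blen U) (snd V - fst U) / 2"
  have "x \<in> block_ivl U \<inter> block_ivl V" "U \<noteq> V"
    using IP_ofD(2)[OF assms(1) assms(2)] assms(4) \<open>\<not> snd V \<le> fst U\<close>
    by (auto simp: x_def block_ivl_def blen_def min_def field_simps)
  then show False using IP_ofD(3)[OF assms(1-3)] by blast
qed

lemma measure_Union_disjoint_blocks:
  assumes "finite F" "\<And>U. U \<in> F \<Longrightarrow> fst U \<le> snd U"
    "\<And>U V. U \<in> F \<Longrightarrow> V \<in> F \<Longrightarrow> U \<noteq> V \<Longrightarrow> block_ivl U \<inter> block_ivl V = {}"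
  shows "measure lborel (\<Union>U\<in>F. block_ivl U) = (\<Sum>U\<in>F. blen U)"
proof -
  have "measure lborel (\<Union>U\<in>F. block_ivl U) = (\<Sum>U\<in>F. measure lborel (block_ivl U))"
    using assms(1,3) emeasure_block_ivl_finite
    by (intro measure_finite_Union) (auto simp: disjoint_family_on_def)
  also have "\<dots> = (\<Sum>U\<in>F. blen U)"
    using assms(2) by (intro sum.cong refl) (simp add: measure_block_ivl)
  finally show ?thesis .
qed

lemma sum_blen_le_interval:
  assumes "finite F" "a \<le> b" "\<And>U. U \<in> F \<Longrightarrow> a \<le> fst U \<and> fst U \<le> snd U \<and> snd U \<le> b"
    "\<And>U V. U \<in> F \<Longrightarrow> V \<in> F \<Longrightarrow> U \<noteq> V \<Longrightarrow> block_ivl U \<inter> block_ivl V = {}"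
  shows "(\<Sum>U\<in>F. blen U) \<le> b - a"
proof -
  have "(\<Union>U\<in>F. block_ivl U) \<subseteq> {a..b}"
    using assms(3) by (force simp: block_ivl_def)
  then have "measure lborel (\<Union>U\<in>F. block_ivl U) \<le> measure lborel {a..b}"
    using assms(2) by (intro measure_mono_fmeasurable) (auto simp: fmeasurable_def)
  then show ?thesis
    using assms(2) measure_Union_disjoint_blocks[OF assms(1) _ assms(4)] assms(3) by simp
qed

lemma IP_of_sum_blen_le_interval:
  assumes "IP_of \<beta> L" "finite F" "F \<subseteq> \<beta>" "a \<le> b" "\<And>W. W \<in> F \<Longrightarrow> a \<le> fst W \<and> snd W \<le> b"
  shows "(\<Sum>W\<in>F. blen W) \<le> b - a"
proof (rule sum_blen_le_interval[OF assms(2,4)])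
  show "a \<le> fst W \<and> fst W \<le> snd W \<and> snd W \<le> b" if "W \<in> F" for W
    using IP_ofD(2)[OF assms(1), of W] assms(3,5) that by auto
  show "block_ivl W \<inter> block_ivl W' = {}" if "W \<in> F" "W' \<in> F" "W \<noteq> W'" for W W'
    using IP_ofD(3)[OF assms(1), of W W'] assms(3) that by auto
qed

lemma IP_of_sum_blen_le:
  assumes "IP_of \<beta> L" "finite F" "F \<subseteq> \<beta>"
  shows "(\<Sum>U\<in>F. blen U) \<le> L"
  using IP_of_sum_blen_le_interval[OF assms, of 0 L] IP_ofD(1,2)[OF assms(1)] assms(3) by auto

lemma IP_of_sum_blen_left_le:
  assumes "IP_of \<beta> L" "U \<in> \<beta>" "finite F" "F \<subseteq> \<beta>" "\<And>W. W \<in> F \<Longrightarrow> fst W < fst U"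
  shows "(\<Sum>W\<in>F. blen W) \<le> fst U"
proof -
  have "(\<Sum>W\<in>F. blen W) \<le> fst U - 0"
  proof (rule IP_of_sum_blen_le_interval[OF assms(1,3,4)])
    show "0 \<le> fst U" using IP_ofD(2)[OF assms(1,2)] by simp
    show "0 \<le> fst W \<and> snd W \<le> fst U" if "W \<in> F" for W
      using IP_ofD(2)[OF assms(1), of W] IP_of_snd_le_fst[OF assms(1,2), of W] assms(4,5) that by auto
  qed
  then show ?thesis by simp
qed

lemma IP_of_sum_blen_right_le:
  assumes "IP_of \<beta> L" "finite F" "F \<subseteq> \<beta>" "a \<le> L" "\<And>W. W \<in> F \<Longrightarrow> a \<le> fst W"
  shows "(\<Sum>W\<in>F. blen W) \<le> L - a"
  using IP_of_sum_blen_le_interval[OF assms(1-4)] IP_ofD(2)[OF assms(1)] assms(3,5) by auto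

lemma IP_of_finite_long_blocks:
  assumes "IP_of \<beta> L" "0 < h"
  shows "finite {U\<in>\<beta>. h < blen U}"
proof -
  have "card G \<le> nat \<lfloor>L / h\<rfloor>" if "G \<subseteq> {U\<in>\<beta>. h < blen U}" "finite G" for G
  proof -
    have "real (card G) * h = (\<Sum>U\<in>G. h)" by simp
    also have "\<dots> \<le> (\<Sum>U\<in>G. blen U)" using that by (intro sum_mono) auto
    also have "\<dots> \<le> L" using IP_of_sum_blen_le[OF assms(1) that(2)] that(1) by auto
    finally have "real (card G) \<le> L / h" using assms(2) by (simp add: field_simps)
    then show ?thesis by linarith
  qed
  then show ?thesis using finite_if_finite_subsets_card_bdd by blast
qed

lemma finite_div_count_set:
  assumes "IP_of \<beta> L" "0 < h"
  shows "finite {(a,b)\<in>\<beta>. b - a > h \<and> b \<le> t}"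
  by (rule finite_subset[OF _ IP_of_finite_long_blocks[OF assms]]) (auto simp: blen_def)

lemma measure_Union_blocks:
  assumes "IP_of \<beta> L"
  shows "measure lborel (\<Union>U\<in>\<beta>. block_ivl U) = L"
proof -
  have "(\<Union>U\<in>\<beta>. block_ivl U) \<subseteq> {0..L}"
    using IP_ofD(2)[OF assms] by (force simp: block_ivl_def)
  moreover have "measure lborel ((\<Union>U\<in>\<beta>. block_ivl U) \<union> ({0..L} - (\<Union>U\<in>\<beta>. block_ivl U)))
      = measure lborel (\<Union>U\<in>\<beta>. block_ivl U)"
    using IP_ofD(4)[OF assms] by (intro measure_Un_null_set) auto
  ultimately show ?thesis using IP_ofD(1)[OF assms] by (simp add: Un_absorb1)
qed

text \<open>The blocks longer than \<open>1/(n+1)\<close> exhaust the mass of \<open>\<beta>\<close> by continuity of measure.\<close>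

lemma IP_of_finite_blocks_cover:
  assumes "IP_of \<beta> L" "0 < \<eta>"
  obtains F where "finite F" "F \<subseteq> \<beta>" "L - \<eta> < (\<Sum>U\<in>F. blen U)"
proof -
  define F where "F n = {U\<in>\<beta>. 1 / (real n + 1) < blen U}" for n :: nat
  define A where "A n = (\<Union>U\<in>F n. block_ivl U)" for n
  have finF: "finite (F n)" for n
    unfolding F_def by (rule IP_of_finite_long_blocks[OF assms(1)]) simp
  have mA: "measure lborel (A n) = (\<Sum>U\<in>F n. blen U)" for n
    unfolding A_def using finF IP_ofD(2,3)[OF assms(1)]
    by (intro measure_Union_disjoint_blocks) (auto simp: F_def less_imp_le)
  have "incseq A"
  proof (rule incseq_SucI)
    fix n
    have "1 / (real (Suc n) + 1) \<le> 1 / (real n + 1)" by (simp add: frac_le)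
    then show "A n \<subseteq> A (Suc n)" unfolding A_def F_def by fastforce
  qed
  have UA: "(\<Union>n. A n) = (\<Union>U\<in>\<beta>. block_ivl U)"
  proof (intro equalityI subsetI)
    fix x assume "x \<in> (\<Union>U\<in>\<beta>. block_ivl U)"
    then obtain U where U: "U \<in> \<beta>" "x \<in> block_ivl U" by blast
    obtain n :: nat where "1 / (real n + 1) < blen U"
      using IP_of_blen_pos[OF assms(1) U(1)] by (metis nat_approx_posE of_nat_Suc add.commute)
    then show "x \<in> (\<Union>n. A n)" using U unfolding A_def F_def by blast
  qed (auto simp: A_def F_def)
  have sub: "(\<Union>U\<in>\<beta>. block_ivl U) \<subseteq> {0..L}"
    using IP_ofD(2)[OF assms(1)] by (force simp: block_ivl_def)
  note measure_Union_blocks[OF assms(1)]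
  moreover have "(\<lambda>n. measure lborel (A n)) \<longlonglongrightarrow> measure lborel (\<Union>n. A n)"
  proof (rule Lim_measure_incseq)
    show "range A \<subseteq> sets lborel" unfolding A_def by auto
    have "emeasure lborel (\<Union>n. A n) \<le> emeasure lborel {0..L}"
      using sub UA by (intro emeasure_mono) auto
    also have "\<dots> < \<infinity>" using IP_ofD(1)[OF assms(1)] by simp
    finally show "emeasure lborel (\<Union>n. A n) \<noteq> \<infinity>" by simp
  qed fact
  ultimately have "(\<lambda>n. measure lborel (A n)) \<longlonglongrightarrow> L" using UA by simp
  then have "eventually (\<lambda>n. L - \<eta> < measure lborel (A n)) sequentially"
    using assms(2) by (intro order_tendstoD) auto
  then obtain n where "L - \<eta> < measure lborel (A n)" by (meson eventually_sequentially order_refl)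
  then have "L - \<eta> < (\<Sum>U\<in>F n. blen U)" by (simp only: mA)
  moreover have "F n \<subseteq> \<beta>" by (auto simp: F_def)
  ultimately show ?thesis using that finF by blast
qed

section \<open>Matchings\<close>

text \<open>A correspondence is determined by its set of pairs, a \<open>matching\<close>; the first two terms of its
  distortion are the \<open>length_defect\<close>s of the matching and of its converse.\<close>

definition increasing_pairs :: "((real \<times> real) \<times> (real \<times> real)) set \<Rightarrow> bool" where
  "increasing_pairs S \<longleftrightarrow> (\<forall>p\<in>S. \<forall>q\<in>S. p \<noteq> q \<longrightarrow>
     (fst (fst p) < fst (fst q) \<and> fst (snd p) < fst (snd q)) \<or>
     (fst (fst q) < fst (fst p) \<and> fst (snd q) < fst (snd p)))"

definition matching :: "(real \<times> real) set \<Rightarrow> (real \<times> real) set \<Rightarrow> ((real \<times> real) \<times> (real \<times> real)) set \<Rightarrow> bool" where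
  "matching \<beta> \<gamma> S \<longleftrightarrow> finite S \<and> S \<subseteq> \<beta> \<times> \<gamma> \<and> increasing_pairs S"

definition length_defect :: "real \<Rightarrow> ((real \<times> real) \<times> (real \<times> real)) set \<Rightarrow> real" where
  "length_defect L S = (\<Sum>p\<in>S. \<bar>blen (fst p) - blen (snd p)\<bar>) + L - (\<Sum>p\<in>S. blen (fst p))"

definition matching_distortion ::
  "real \<Rightarrow> (real \<times> real) set \<Rightarrow> (real \<times> real) set \<Rightarrow> ((real \<times> real) \<times> (real \<times> real)) set \<Rightarrow> real" where
  "matching_distortion \<alpha> \<beta> \<gamma> S = Max (
     {length_defect (IPlen \<beta>) S, length_defect (IPlen \<gamma>) (converse S),
      \<bar>div_inf \<alpha> \<beta> - div_inf \<alpha> \<gamma>\<bar>}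
     \<union> (\<lambda>p. \<bar>div_block \<alpha> \<beta> (fst p) - div_block \<alpha> \<gamma> (snd p)\<bar>) ` S)"

lemma increasing_pairsD:
  assumes "increasing_pairs S" "p \<in> S" "q \<in> S"
  shows "fst (fst p) < fst (fst q) \<longleftrightarrow> fst (snd p) < fst (snd q)"
proof (cases "p = q")
  case False
  then have "(fst (fst p) < fst (fst q) \<and> fst (snd p) < fst (snd q)) \<or>
      (fst (fst q) < fst (fst p) \<and> fst (snd q) < fst (snd p))"
    using assms unfolding increasing_pairs_def by blast
  then show ?thesis by linarith
qed simp

lemma increasing_pairs_subset: "increasing_pairs S \<Longrightarrow> T \<subseteq> S \<Longrightarrow> increasing_pairs T"
  unfolding increasing_pairs_def by blast

lemma increasing_pairs_inj_on_fst: "increasing_pairs S \<Longrightarrow> inj_on fst S"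
  unfolding increasing_pairs_def inj_on_def by force

lemma increasing_pairs_inj_on_snd: "increasing_pairs S \<Longrightarrow> inj_on snd S"
  unfolding increasing_pairs_def inj_on_def by force

lemma converse_eq_swap_image: "converse S = prod.swap ` S"
  by auto

lemma increasing_pairs_converse: "increasing_pairs S \<Longrightarrow> increasing_pairs (converse S)"
  unfolding converse_eq_swap_image increasing_pairs_def by auto

lemma increasing_pairs_image:
  fixes F :: "(real \<times> real) set"
  assumes "\<And>U U'. U \<in> F \<Longrightarrow> U' \<in> F \<Longrightarrow> fst U < fst U' \<Longrightarrow> fst (f U) < fst (f U') \<and> fst (g U) < fst (g U')"
    "inj_on fst F"
  shows "increasing_pairs ((\<lambda>U. (f U, g U)) ` F)"
  unfolding increasing_pairs_def
proof (intro ballI impI)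
  fix p q assume "p \<in> (\<lambda>U. (f U, g U)) ` F" "q \<in> (\<lambda>U. (f U, g U)) ` F" "p \<noteq> q"
  then obtain U U' where UU: "U \<in> F" "U' \<in> F" "p = (f U, g U)" "q = (f U', g U')" by blast
  with \<open>p \<noteq> q\<close> have "U \<noteq> U'" by auto
  then have "fst U \<noteq> fst U'" using assms(2) UU(1,2) by (auto simp: inj_on_def)
  then have "fst U < fst U' \<or> fst U' < fst U" by (simp add: neq_iff)
  then show "(fst (fst p) < fst (fst q) \<and> fst (snd p) < fst (snd q)) \<or>
      (fst (fst q) < fst (fst p) \<and> fst (snd q) < fst (snd p))"
    using assms(1)[of U U'] assms(1)[of U' U] UU by auto
qed

lemma IP_of_inj_on_fst: "IP_of \<beta> L \<Longrightarrow> F \<subseteq> \<beta> \<Longrightarrow> inj_on fst F"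
  by (meson IP_of_fst_eq_imp_eq inj_onI subsetD)

lemma matching_diagonal:
  assumes "IP_of \<beta> L" "finite F" "F \<subseteq> \<beta>"
  shows "matching \<beta> \<beta> ((\<lambda>U. (U, U)) ` F)"
  using assms IP_of_inj_on_fst[OF assms(1,3)]
  unfolding matching_def by (auto intro!: increasing_pairs_image)

lemma matching_empty: "matching \<beta> \<gamma> {}"
  by (simp add: matching_def increasing_pairs_def)

lemma matching_subset: "matching \<beta> \<gamma> S \<Longrightarrow> T \<subseteq> S \<Longrightarrow> matching \<beta> \<gamma> T"
  unfolding matching_def using increasing_pairs_subset finite_subset by blast

lemma matching_converse: "matching \<beta> \<gamma> S \<Longrightarrow> matching \<gamma> \<beta> (converse S)"
  unfolding matching_def using increasing_pairs_converse by auto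

lemma sum_converse: "(\<Sum>p\<in>converse S. f p) = (\<Sum>p\<in>S. f (prod.swap p))"
  unfolding converse_eq_swap_image by (simp add: sum.reindex)

lemma length_defect_converse:
  "length_defect L (converse S) = (\<Sum>p\<in>S. \<bar>blen (fst p) - blen (snd p)\<bar>) + L - (\<Sum>p\<in>S. blen (snd p))"
  unfolding length_defect_def sum_converse by (simp add: abs_minus_commute)

lemma matching_distortion_ge:
  assumes "finite S"
  shows "length_defect (IPlen \<beta>) S \<le> matching_distortion \<alpha> \<beta> \<gamma> S"
    "length_defect (IPlen \<gamma>) (converse S) \<le> matching_distortion \<alpha> \<beta> \<gamma> S"
    "\<bar>div_inf \<alpha> \<beta> - div_inf \<alpha> \<gamma>\<bar> \<le> matching_distortion \<alpha> \<beta> \<gamma> S"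
    "\<And>p. p \<in> S \<Longrightarrow> \<bar>div_block \<alpha> \<beta> (fst p) - div_block \<alpha> \<gamma> (snd p)\<bar> \<le> matching_distortion \<alpha> \<beta> \<gamma> S"
  unfolding matching_distortion_def by (rule Max_ge, simp add: assms, simp)+

lemma matching_distortion_le:
  assumes "finite S" "length_defect (IPlen \<beta>) S \<le> c" "length_defect (IPlen \<gamma>) (converse S) \<le> c"
    "\<bar>div_inf \<alpha> \<beta> - div_inf \<alpha> \<gamma>\<bar> \<le> c"
    "\<And>p. p \<in> S \<Longrightarrow> \<bar>div_block \<alpha> \<beta> (fst p) - div_block \<alpha> \<gamma> (snd p)\<bar> \<le> c"
  shows "matching_distortion \<alpha> \<beta> \<gamma> S \<le> c"
  unfolding matching_distortion_def using assms by (subst Max_le_iff) auto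

lemma matching_distortion_nonneg: "finite S \<Longrightarrow> 0 \<le> matching_distortion \<alpha> \<beta> \<gamma> S"
  using matching_distortion_ge(3) abs_ge_zero order_trans by blast

lemma matching_distortion_converse:
  assumes "finite S"
  shows "matching_distortion \<alpha> \<gamma> \<beta> (converse S) = matching_distortion \<alpha> \<beta> \<gamma> S"
proof -
  have "(\<lambda>p. \<bar>div_block \<alpha> \<gamma> (fst p) - div_block \<alpha> \<beta> (snd p)\<bar>) ` converse S
      = (\<lambda>p. \<bar>div_block \<alpha> \<beta> (fst p) - div_block \<alpha> \<gamma> (snd p)\<bar>) ` S"
    by (force simp: abs_minus_commute)
  moreover have "{x, y, z} = {y, x, z}" for x y z :: real by blast
  ultimately show ?thesis
    unfolding matching_distortion_def by (simp add: abs_minus_commute)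
qed

lemma sorted_wrt_irrefl_distinct: "sorted_wrt R xs \<Longrightarrow> (\<And>x. \<not> R x x) \<Longrightarrow> distinct xs"
  by (induction xs) auto

lemma increasing_pairs_set:
  assumes "sorted_wrt (\<lambda>(U,V) (U',V'). fst U < fst U' \<and> fst V < fst V') \<sigma>"
  shows "increasing_pairs (set \<sigma>)"
  using assms
proof (induction \<sigma>)
  case (Cons p \<sigma>)
  then have IH: "increasing_pairs (set \<sigma>)"
    and p: "\<And>q. q \<in> set \<sigma> \<Longrightarrow> fst (fst p) < fst (fst q) \<and> fst (snd p) < fst (snd q)"
    by (auto simp: split_beta)
  show ?case unfolding increasing_pairs_def
  proof (intro ballI impI)
    fix x y assume "x \<in> set (p # \<sigma>)" "y \<in> set (p # \<sigma>)" "x \<noteq> y"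
    then consider "x = p" "y \<in> set \<sigma>" | "y = p" "x \<in> set \<sigma>" | "x \<in> set \<sigma>" "y \<in> set \<sigma>"
      by auto
    then show "(fst (fst x) < fst (fst y) \<and> fst (snd x) < fst (snd y)) \<or>
        (fst (fst y) < fst (fst x) \<and> fst (snd y) < fst (snd x))"
      using IH p \<open>x \<noteq> y\<close> unfolding increasing_pairs_def by cases blast+
  qed
qed (simp add: increasing_pairs_def)

lemma correspondence_matching:
  assumes "correspondence \<beta> \<gamma> \<sigma>"
  shows "matching \<beta> \<gamma> (set \<sigma>)" "distortion \<alpha> \<beta> \<gamma> \<sigma> = matching_distortion \<alpha> \<beta> \<gamma> (set \<sigma>)"
proof -
  have sw: "sorted_wrt (\<lambda>(U,V) (U',V'). fst U < fst U' \<and> fst V < fst V') \<sigma>"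
    using assms by (simp add: correspondence_def)
  have "set \<sigma> \<subseteq> \<beta> \<times> \<gamma>" using assms by (auto simp: correspondence_def)
  then show "matching \<beta> \<gamma> (set \<sigma>)" using increasing_pairs_set[OF sw] by (simp add: matching_def)
  have "distinct \<sigma>" by (rule sorted_wrt_irrefl_distinct[OF sw]) auto
  then have sums: "(\<Sum>(U,V)\<leftarrow>\<sigma>. f U V) = (\<Sum>p\<in>set \<sigma>. f (fst p) (snd p))" for f :: "_ \<Rightarrow> _ \<Rightarrow> real"
    by (simp add: sum_list_distinct_conv_sum_set split_def)
  have img: "(\<lambda>(U,V). g U V) ` set \<sigma> = (\<lambda>p. g (fst p) (snd p)) ` set \<sigma>" for g :: "_ \<Rightarrow> _ \<Rightarrow> real"
    by (simp add: split_def)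
  show "distortion \<alpha> \<beta> \<gamma> \<sigma> = matching_distortion \<alpha> \<beta> \<gamma> (set \<sigma>)"
    unfolding distortion_def matching_distortion_def length_defect_converse
    unfolding length_defect_def sums img ..
qed

lemma matching_correspondence:
  assumes "matching \<beta> \<gamma> S"
  obtains \<sigma> where "correspondence \<beta> \<gamma> \<sigma>" "set \<sigma> = S"
proof -
  have "finite S" using assms by (simp add: matching_def)
  then have "\<exists>\<sigma>. correspondence \<beta> \<gamma> \<sigma> \<and> set \<sigma> = S" using assms
  proof (induction S rule: finite_psubset_induct)
    case (psubset S)
    show ?case
    proof (cases "S = {}")
      case True then show ?thesis by (intro exI[of _ "[]"]) (simp add: correspondence_def)
    next
      case False
      define m where "m = Min ((\<lambda>p. fst (fst p)) ` S)"
      have "m \<in> (\<lambda>p. fst (fst p)) ` S" unfolding m_def using psubset(1) False by (intro Min_in) auto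
      then obtain p where p: "p \<in> S" "fst (fst p) = m" by auto
      have m_le: "m \<le> fst (fst q)" if "q \<in> S" for q
        unfolding m_def using psubset(1) that by simp
      obtain \<sigma> where \<sigma>: "correspondence \<beta> \<gamma> \<sigma>" "set \<sigma> = S - {p}"
        using psubset(2)[of "S - {p}"] matching_subset[OF psubset(3)] p(1) by blast
      have inc: "increasing_pairs S" and "p \<in> \<beta> \<times> \<gamma>"
        using psubset(3) p(1) by (auto simp: matching_def)
      moreover have "fst (fst p) < fst (fst q) \<and> fst (snd p) < fst (snd q)" if "q \<in> set \<sigma>" for q
      proof -
        have "q \<in> S" "q \<noteq> p" using \<sigma>(2) that by auto
        then have "(fst (fst p) < fst (fst q) \<and> fst (snd p) < fst (snd q)) \<or>
            (fst (fst q) < fst (fst p) \<and> fst (snd q) < fst (snd p))"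
          using inc p(1) unfolding increasing_pairs_def by blast
        then show ?thesis using m_le[OF \<open>q \<in> S\<close>] p(2) by linarith
      qed
      ultimately have "correspondence \<beta> \<gamma> (p # \<sigma>)"
        using \<sigma>(1) unfolding correspondence_def by (simp add: split_beta mem_Times_iff)
      then show ?thesis using \<sigma>(2) p(1) by (intro exI[of _ "p # \<sigma>"]) auto
    qed
  qed
  then show ?thesis using that by blast
qed

lemma d_alpha_eq_Inf_matching:
  "d_alpha \<alpha> \<beta> \<gamma> = Inf {matching_distortion \<alpha> \<beta> \<gamma> S | S. matching \<beta> \<gamma> S}"
proof -
  have "{distortion \<alpha> \<beta> \<gamma> \<sigma> | \<sigma>. correspondence \<beta> \<gamma> \<sigma>}
      = {matching_distortion \<alpha> \<beta> \<gamma> S | S. matching \<beta> \<gamma> S}"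
    (is "?A = ?B")
  proof
    show "?A \<subseteq> ?B"
    proof
      fix x assume "x \<in> ?A"
      then obtain \<sigma> where "correspondence \<beta> \<gamma> \<sigma>" "x = distortion \<alpha> \<beta> \<gamma> \<sigma>" by blast
      then show "x \<in> ?B" using correspondence_matching[of \<beta> \<gamma> \<sigma>] by auto
    qed
    show "?B \<subseteq> ?A"
    proof
      fix x assume "x \<in> ?B"
      then obtain S where S: "matching \<beta> \<gamma> S" "x = matching_distortion \<alpha> \<beta> \<gamma> S" by blast
      obtain \<sigma> where \<sigma>: "correspondence \<beta> \<gamma> \<sigma>" "set \<sigma> = S"
        by (rule matching_correspondence[OF S(1)])
      then have "x = distortion \<alpha> \<beta> \<gamma> \<sigma>" using S(2) correspondence_matching(2)[OF \<sigma>(1)] by simp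
      with \<sigma>(1) show "x \<in> ?A" by blast
    qed
  qed
  then show ?thesis unfolding d_alpha_def by simp
qed

lemma d_alpha_nonneg: "0 \<le> d_alpha \<alpha> \<beta> \<gamma>"
  unfolding d_alpha_eq_Inf_matching
proof (rule cInf_greatest)
  show "{matching_distortion \<alpha> \<beta> \<gamma> S | S. matching \<beta> \<gamma> S} \<noteq> {}"
    using matching_empty by blast
qed (auto intro: matching_distortion_nonneg simp: matching_def)

lemma d_alpha_le_matching_distortion:
  "matching \<beta> \<gamma> S \<Longrightarrow> d_alpha \<alpha> \<beta> \<gamma> \<le> matching_distortion \<alpha> \<beta> \<gamma> S"
  unfolding d_alpha_eq_Inf_matching
  by (rule cInf_lower) (auto intro!: bdd_belowI[of _ 0] matching_distortion_nonneg simp: matching_def)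

lemma d_alpha_lessE:
  assumes "d_alpha \<alpha> \<beta> \<gamma> < e"
  obtains S where "matching \<beta> \<gamma> S" "matching_distortion \<alpha> \<beta> \<gamma> S < e"
proof -
  have "{matching_distortion \<alpha> \<beta> \<gamma> S | S. matching \<beta> \<gamma> S} \<noteq> {}"
    using matching_empty by blast
  from cInf_lessD[OF this] assms that show ?thesis unfolding d_alpha_eq_Inf_matching by blast
qed

lemma d_alpha_commute: "d_alpha \<alpha> \<beta> \<gamma> = d_alpha \<alpha> \<gamma> \<beta>"
proof -
  have sub: "{matching_distortion \<alpha> \<beta> \<gamma> S | S. matching \<beta> \<gamma> S}
      \<subseteq> {matching_distortion \<alpha> \<gamma> \<beta> S | S. matching \<gamma> \<beta> S}" for \<beta> \<gamma>
  proof
    fix x assume "x \<in> {matching_distortion \<alpha> \<beta> \<gamma> S | S. matching \<beta> \<gamma> S}"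
    then obtain S where S: "matching \<beta> \<gamma> S" "x = matching_distortion \<alpha> \<beta> \<gamma> S" by blast
    then have "x = matching_distortion \<alpha> \<gamma> \<beta> (converse S)"
      using matching_distortion_converse by (simp add: matching_def)
    with matching_converse[OF S(1)]
    show "x \<in> {matching_distortion \<alpha> \<gamma> \<beta> S | S. matching \<gamma> \<beta> S}" by blast
  qed
  show ?thesis unfolding d_alpha_eq_Inf_matching by (rule arg_cong[where f = Inf], rule equalityI[OF sub sub])
qed

section \<open>\<open>d_alpha\<close> is a metric\<close>

lemma matching_sum_fst:
  assumes "matching \<beta> \<gamma> S" "T \<subseteq> S"
  shows "(\<Sum>p\<in>T. f (fst p)) = (\<Sum>U\<in>fst ` T. f U)"
proof -
  have "inj_on fst T"
    using assms increasing_pairs_inj_on_fst inj_on_subset unfolding matching_def by blast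
  then show ?thesis by (simp add: sum.reindex)
qed

lemma matching_sum_snd:
  assumes "matching \<beta> \<gamma> S" "T \<subseteq> S"
  shows "(\<Sum>p\<in>T. f (snd p)) = (\<Sum>V\<in>snd ` T. f V)"
proof -
  have "inj_on snd T"
    using assms increasing_pairs_inj_on_snd inj_on_subset unfolding matching_def by blast
  then show ?thesis by (simp add: sum.reindex)
qed

lemma matching_sum_blen_fst_le:
  assumes "IP_of \<beta> L" "matching \<beta> \<gamma> S" "T \<subseteq> S"
  shows "(\<Sum>p\<in>T. blen (fst p)) \<le> L"
  unfolding matching_sum_fst[OF assms(2,3)]
  using assms by (intro IP_of_sum_blen_le) (auto simp: matching_def dest: finite_subset)

lemma matched_blen_diff_le_length_defect:
  assumes "IP_of \<beta> L" "matching \<beta> \<gamma> S" "p \<in> S"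
  shows "\<bar>blen (fst p) - blen (snd p)\<bar> \<le> length_defect L S"
proof -
  have "\<bar>blen (fst p) - blen (snd p)\<bar> \<le> (\<Sum>p\<in>S. \<bar>blen (fst p) - blen (snd p)\<bar>)"
    using assms(2,3) by (intro member_le_sum) (auto simp: matching_def)
  then show ?thesis
    using matching_sum_blen_fst_le[OF assms(1,2) order_refl] unfolding length_defect_def by linarith
qed

lemma unmatched_blen_le_length_defect:
  assumes "IP_of \<beta> L" "matching \<beta> \<gamma> S" "U \<in> \<beta>" "U \<notin> fst ` S"
  shows "blen U \<le> length_defect L S"
proof -
  have "(\<Sum>W\<in>insert U (fst ` S). blen W) \<le> L"
    using assms by (intro IP_of_sum_blen_le) (auto simp: matching_def)
  then have "blen U + (\<Sum>W\<in>fst ` S. blen W) \<le> L"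
    using assms(2,4) by (simp add: matching_def)
  then have "blen U + (\<Sum>p\<in>S. blen (fst p)) \<le> L"
    by (simp only: matching_sum_fst[OF assms(2) order_refl])
  moreover have "0 \<le> (\<Sum>p\<in>S. \<bar>blen (fst p) - blen (snd p)\<bar>)" by (simp add: sum_nonneg)
  ultimately show ?thesis unfolding length_defect_def by linarith
qed

text \<open>The blocks of \<open>\<beta>\<close> matched to the left of \<open>U\<close> have total length close to that of their
  partners, which all lie left of \<open>V\<close>; those matched to the right lie right of \<open>U\<close>.\<close>

lemma matched_fst_diff_le_length_defect:
  assumes \<beta>: "IP_of \<beta> L\<beta>" and \<gamma>: "IP_of \<gamma> L\<gamma>" and S: "matching \<beta> \<gamma> S" and UV: "(U, V) \<in> S"
  shows "fst U - fst V \<le> length_defect L\<beta> S"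
proof -
  have fin: "finite S" and inc: "increasing_pairs S" and sub: "S \<subseteq> \<beta> \<times> \<gamma>"
    using S by (auto simp: matching_def)
  have U: "U \<in> \<beta>" and V: "V \<in> \<gamma>" using sub UV by auto
  define Le where "Le = {p\<in>S. fst (fst p) < fst U}"
  have Le_snd: "Le = {p\<in>S. fst (snd p) < fst V}"
    using increasing_pairsD[OF inc _ UV] by (auto simp: Le_def)
  have LeS: "Le \<subseteq> S" by (auto simp: Le_def)
  have finLe: "finite Le" using finite_subset[OF LeS fin] .
  have left: "(\<Sum>p\<in>Le. blen (snd p)) \<le> fst V"
    unfolding matching_sum_snd[OF S LeS] using finLe sub
    by (intro IP_of_sum_blen_left_le[OF \<gamma> V]) (auto simp: Le_snd)
  have right: "(\<Sum>p\<in>S - Le. blen (fst p)) \<le> L\<beta> - fst U"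
    unfolding matching_sum_fst[OF S Diff_subset] using fin sub IP_ofD(2)[OF \<beta> U]
    by (intro IP_of_sum_blen_right_le[OF \<beta>]) (auto simp: Le_def)
  have "(\<Sum>p\<in>Le. blen (fst p) - blen (snd p)) \<le> (\<Sum>p\<in>Le. \<bar>blen (fst p) - blen (snd p)\<bar>)"
    by (intro sum_mono) simp
  also have "\<dots> \<le> (\<Sum>p\<in>S. \<bar>blen (fst p) - blen (snd p)\<bar>)"
    by (intro sum_mono2[OF fin LeS]) simp
  finally have diff: "(\<Sum>p\<in>Le. blen (fst p)) - (\<Sum>p\<in>Le. blen (snd p))
      \<le> (\<Sum>p\<in>S. \<bar>blen (fst p) - blen (snd p)\<bar>)"
    by (simp add: sum_subtractf)
  have "(\<Sum>p\<in>S. blen (fst p)) = (\<Sum>p\<in>Le. blen (fst p)) + (\<Sum>p\<in>S - Le. blen (fst p))"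
    using sum.subset_diff[OF LeS fin, of "\<lambda>p. blen (fst p)"] by linarith
  then show ?thesis using left right diff unfolding length_defect_def by linarith
qed

lemma matching_distortion_ge_matched:
  assumes \<beta>: "IP_of \<beta> L\<beta>" and \<gamma>: "IP_of \<gamma> L\<gamma>" and S: "matching \<beta> \<gamma> S" and UV: "(U, V) \<in> S"
  shows "\<bar>fst U - fst V\<bar> \<le> matching_distortion \<alpha> \<beta> \<gamma> S"
    "\<bar>blen U - blen V\<bar> \<le> matching_distortion \<alpha> \<beta> \<gamma> S"
proof -
  have fin: "finite S" using S by (simp add: matching_def)
  note D = matching_distortion_ge(1,2)[OF fin, where \<alpha> = \<alpha> and \<beta> = \<beta> and \<gamma> = \<gamma>]
  have "fst U - fst V \<le> length_defect L\<beta> S"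
    by (rule matched_fst_diff_le_length_defect[OF \<beta> \<gamma> S UV])
  moreover have "(V, U) \<in> converse S" using UV by force
  then have "fst V - fst U \<le> length_defect L\<gamma> (converse S)"
    by (rule matched_fst_diff_le_length_defect[OF \<gamma> \<beta> matching_converse[OF S]])
  ultimately show "\<bar>fst U - fst V\<bar> \<le> matching_distortion \<alpha> \<beta> \<gamma> S"
    using D IPlen_eqI[OF \<beta>] IPlen_eqI[OF \<gamma>] by (auto simp: abs_le_iff)
  show "\<bar>blen U - blen V\<bar> \<le> matching_distortion \<alpha> \<beta> \<gamma> S"
    using matched_blen_diff_le_length_defect[OF \<beta> S UV] D IPlen_eqI[OF \<beta>] by simp
qed

lemma d_alpha_zero_close_block:
  assumes \<beta>: "IP_of \<beta> L\<beta>" and \<gamma>: "IP_of \<gamma> L\<gamma>" and d: "d_alpha \<alpha> \<beta> \<gamma> = 0"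
    and U: "U \<in> \<beta>" and e: "0 < e" "e < blen U"
  obtains V where "V \<in> \<gamma>" "\<bar>fst U - fst V\<bar> \<le> e" "\<bar>blen U - blen V\<bar> \<le> e"
proof -
  obtain S where S: "matching \<beta> \<gamma> S" "matching_distortion \<alpha> \<beta> \<gamma> S < e"
    using d_alpha_lessE[of \<alpha> \<beta> \<gamma> e] d e(1) by auto
  have fin: "finite S" using S(1) by (simp add: matching_def)
  have "U \<in> fst ` S"
  proof (rule ccontr)
    assume "U \<notin> fst ` S"
    then have "blen U \<le> length_defect L\<beta> S"
      by (rule unmatched_blen_le_length_defect[OF \<beta> S(1) U])
    then show False
      using matching_distortion_ge(1)[OF fin, where \<alpha> = \<alpha> and \<beta> = \<beta> and \<gamma> = \<gamma>] IPlen_eqI[OF \<beta>] S(2) e(2) by simp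
  qed
  then obtain V where UV: "(U, V) \<in> S" by force
  then have "V \<in> \<gamma>" using S(1) by (auto simp: matching_def)
  then show ?thesis
    using that matching_distortion_ge_matched[OF \<beta> \<gamma> S(1) UV, of \<alpha>] S(2) by simp
qed

text \<open>For small \<open>e\<close> all these nearby blocks of \<open>\<gamma>\<close> contain the midpoint of \<open>U\<close>, so they
  coincide; hence \<open>U\<close> itself is a block of \<open>\<gamma>\<close>.\<close>

lemma d_alpha_zero_imp_subset:
  assumes \<beta>: "IP_of \<beta> L\<beta>" and \<gamma>: "IP_of \<gamma> L\<gamma>" and d: "d_alpha \<alpha> \<beta> \<gamma> = 0"
  shows "\<beta> \<subseteq> \<gamma>"
proof
  fix U assume U: "U \<in> \<beta>"
  define e0 where "e0 = blen U / 8"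
  have e0: "0 < e0" "e0 < blen U" using IP_of_blen_pos[OF \<beta> U] by (auto simp: e0_def)
  define m where "m = fst U + blen U / 2"
  have m_in: "m \<in> block_ivl V" if "\<bar>fst U - fst V\<bar> \<le> e0" "\<bar>blen U - blen V\<bar> \<le> e0" for V
  proof -
    have "fst V \<le> fst U + e0" "fst U - e0 \<le> fst V" "blen U - e0 \<le> blen V"
      using that by (simp_all add: abs_le_iff)
    then have "fst V < m" "m < fst V + blen V" using e0(1) unfolding m_def e0_def by linarith+
    then show ?thesis by (simp add: block_ivl_def blen_def)
  qed
  obtain V0 where V0: "V0 \<in> \<gamma>" "\<bar>fst U - fst V0\<bar> \<le> e0" "\<bar>blen U - blen V0\<bar> \<le> e0"
    using d_alpha_zero_close_block[OF \<beta> \<gamma> d U e0] .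
  have close: "\<bar>fst U - fst V0\<bar> \<le> e \<and> \<bar>blen U - blen V0\<bar> \<le> e" if "0 < e" for e
  proof -
    define e' where "e' = min e e0"
    have "0 < e'" "e' < blen U" using that e0 by (auto simp: e'_def)
    then obtain V where V: "V \<in> \<gamma>" "\<bar>fst U - fst V\<bar> \<le> e'" "\<bar>blen U - blen V\<bar> \<le> e'"
      using d_alpha_zero_close_block[OF \<beta> \<gamma> d U] by blast
    have "m \<in> block_ivl V \<inter> block_ivl V0" using m_in V V0 by (simp add: e'_def)
    then have "V = V0" using IP_ofD(3)[OF \<gamma> V(1) V0(1)] by blast
    then show ?thesis using V by (simp add: e'_def)
  qed
  have "\<bar>fst U - fst V0\<bar> \<le> 0" by (rule field_le_epsilon) (use close in simp)
  moreover have "\<bar>blen U - blen V0\<bar> \<le> 0" by (rule field_le_epsilon) (use close in simp)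
  ultimately have "U = V0" by (simp add: blen_def prod_eq_iff)
  then show "U \<in> \<gamma>" using V0(1) by simp
qed

lemma d_alpha_zero_imp_eq:
  assumes "IP_of \<beta> L\<beta>" "IP_of \<gamma> L\<gamma>" "d_alpha \<alpha> \<beta> \<gamma> = 0"
  shows "\<beta> = \<gamma>"
  using d_alpha_zero_imp_subset[OF assms] d_alpha_zero_imp_subset[OF assms(2,1)] assms(3)
    d_alpha_commute[of \<alpha> \<beta> \<gamma>]
  by auto

lemma d_alpha_self:
  assumes "IP_of \<beta> L"
  shows "d_alpha \<alpha> \<beta> \<beta> = 0"
proof -
  have "d_alpha \<alpha> \<beta> \<beta> \<le> 0 + \<eta>" if \<eta>: "0 < \<eta>" for \<eta>
  proof -
    obtain F where F: "finite F" "F \<subseteq> \<beta>" "L - \<eta> < (\<Sum>U\<in>F. blen U)"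
      using IP_of_finite_blocks_cover[OF assms \<eta>] .
    define S where "S = (\<lambda>U. (U, U)) ` F"
    have S: "matching \<beta> \<beta> S" unfolding S_def by (rule matching_diagonal[OF assms F(1,2)])
    have sums: "(\<Sum>p\<in>S. f p) = (\<Sum>U\<in>F. f (U, U))" for f :: "_ \<Rightarrow> real"
      unfolding S_def by (simp add: sum.reindex inj_on_def)
    have "(\<Sum>p\<in>S. \<bar>blen (fst p) - blen (snd p)\<bar>) = 0" "(\<Sum>p\<in>S. blen (fst p)) = (\<Sum>U\<in>F. blen U)"
      "(\<Sum>p\<in>S. blen (snd p)) = (\<Sum>U\<in>F. blen U)"
      by (simp_all add: sums)
    then have "length_defect L S \<le> \<eta>" "length_defect L (converse S) \<le> \<eta>"
      using F(3) unfolding length_defect_converse unfolding length_defect_def by simp_all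
    then have "matching_distortion \<alpha> \<beta> \<beta> S \<le> \<eta>"
      using F(1) \<eta> IPlen_eqI[OF assms] by (intro matching_distortion_le) (auto simp: S_def)
    then show ?thesis using d_alpha_le_matching_distortion[OF S, where \<alpha> = \<alpha>] by simp
  qed
  then show ?thesis using d_alpha_nonneg[of \<alpha> \<beta> \<beta>] field_le_epsilon[of "d_alpha \<alpha> \<beta> \<beta>" 0] by simp
qed

lemma matching_relcomp:
  assumes S1: "matching \<beta> \<gamma> S1" and S2: "matching \<gamma> \<delta> S2"
  shows "matching \<beta> \<delta> (S1 O S2)"
proof -
  have inc1: "increasing_pairs S1" and inc2: "increasing_pairs S2"
    using assms by (auto simp: matching_def)
  have "increasing_pairs (S1 O S2)" unfolding increasing_pairs_def
  proof (intro ballI impI)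
    fix p q assume "p \<in> S1 O S2" "q \<in> S1 O S2" "p \<noteq> q"
    then obtain U V W U' V' W' where UVW: "(U, V) \<in> S1" "(V, W) \<in> S2" "p = (U, W)"
      "(U', V') \<in> S1" "(V', W') \<in> S2" "q = (U', W')"
      by blast
    have "V \<noteq> V'"
    proof
      assume "V = V'"
      then have "U = U'" "W = W'"
        using increasing_pairs_inj_on_snd[OF inc1] increasing_pairs_inj_on_fst[OF inc2] UVW
        unfolding inj_on_def by force+
      then show False using \<open>p \<noteq> q\<close> UVW by simp
    qed
    then have "(fst U < fst U' \<and> fst V < fst V') \<or> (fst U' < fst U \<and> fst V' < fst V)"
      "(fst V < fst V' \<and> fst W < fst W') \<or> (fst V' < fst V \<and> fst W' < fst W)"
      using inc1 inc2 UVW unfolding increasing_pairs_def by (metis fst_conv snd_conv prod.inject)+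
    then show "(fst (fst p) < fst (fst q) \<and> fst (snd p) < fst (snd q)) \<or>
        (fst (fst q) < fst (fst p) \<and> fst (snd q) < fst (snd p))"
      using UVW by auto
  qed
  then show ?thesis using assms by (auto simp: matching_def)
qed

text \<open>Pairs of \<open>S1 O S2\<close> correspond to the triples \<open>(U, V, W)\<close> with \<open>(U, V) \<in> S1\<close> and
  \<open>(V, W) \<in> S2\<close>, hence to the pairs of \<open>S1\<close> whose second block is matched by \<open>S2\<close>.\<close>

lemma matching_relcomp_sums:
  assumes S1: "matching \<beta> \<gamma> S1" and S2: "matching \<gamma> \<delta> S2"
  shows "(\<Sum>p\<in>S1 O S2. \<bar>blen (fst p) - blen (snd p)\<bar>)
      \<le> (\<Sum>p\<in>{p\<in>S1. snd p \<in> fst ` S2}. \<bar>blen (fst p) - blen (snd p)\<bar>) + (\<Sum>q\<in>S2. \<bar>blen (fst q) - blen (snd q)\<bar>)"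
    and "(\<Sum>p\<in>S1 O S2. blen (fst p)) = (\<Sum>p\<in>{p\<in>S1. snd p \<in> fst ` S2}. blen (fst p))"
proof -
  let ?d = "\<lambda>p. \<bar>blen (fst p) - blen (snd p)\<bar>"
  have fin2: "finite S2" and inc1: "increasing_pairs S1" and inc2: "increasing_pairs S2"
    using S1 S2 by (auto simp: matching_def)
  note inj = increasing_pairs_inj_on_fst[OF inc1] increasing_pairs_inj_on_snd[OF inc1]
    increasing_pairs_inj_on_fst[OF inc2]
  define T where "T = {(p, q). p \<in> S1 \<and> q \<in> S2 \<and> snd p = fst q}"
  have P1: "{p\<in>S1. snd p \<in> fst ` S2} = fst ` T" by (force simp: T_def)
  have P2S: "snd ` T \<subseteq> S2" by (auto simp: T_def)
  have comp: "S1 O S2 = (\<lambda>(p, q). (fst p, snd q)) ` T"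
  proof (intro equalityI subsetI)
    fix x assume "x \<in> S1 O S2"
    then obtain U V W where "(U, V) \<in> S1" "(V, W) \<in> S2" "x = (U, W)" by blast
    then show "x \<in> (\<lambda>(p, q). (fst p, snd q)) ` T"
      unfolding T_def by (intro image_eqI[of _ _ "((U, V), (V, W))"]) auto
  qed (auto simp: T_def relcomp.simps)
  have inj_fst: "inj_on fst T"
  proof (rule inj_onI)
    fix x y assume xy: "x \<in> T" "y \<in> T" "fst x = fst y"
    then have "snd x = snd y" using inj_onD[OF inj(3), of "snd x" "snd y"] by (auto simp: T_def)
    with xy(3) show "x = y" by (simp add: prod_eq_iff)
  qed
  have inj_snd: "inj_on snd T"
  proof (rule inj_onI)
    fix x y assume xy: "x \<in> T" "y \<in> T" "snd x = snd y"
    then have "fst x = fst y" using inj_onD[OF inj(2), of "fst x" "fst y"] by (auto simp: T_def)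
    with xy(3) show "x = y" by (simp add: prod_eq_iff)
  qed
  have inj_comp: "inj_on (\<lambda>(p, q). (fst p, snd q)) T"
  proof (rule inj_onI)
    fix x y assume xy: "x \<in> T" "y \<in> T" "(\<lambda>(p, q). (fst p, snd q)) x = (\<lambda>(p, q). (fst p, snd q)) y"
    then have "fst (fst x) = fst (fst y)" by (simp add: case_prod_unfold)
    then have "fst x = fst y" using inj_onD[OF inj(1), of "fst x" "fst y"] xy(1,2) by (auto simp: T_def)
    then show "x = y" using inj_fst xy(1,2) by (auto dest: inj_onD)
  qed
  have sum_comp: "(\<Sum>p\<in>S1 O S2. f p) = (\<Sum>(p, q)\<in>T. f (fst p, snd q))" for f :: "_ \<Rightarrow> real"
    unfolding comp sum.reindex[OF inj_comp] by (simp add: case_prod_unfold)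
  have sum_P1: "(\<Sum>p\<in>{p\<in>S1. snd p \<in> fst ` S2}. f p) = (\<Sum>(p, q)\<in>T. f p)" for f :: "_ \<Rightarrow> real"
    unfolding P1 sum.reindex[OF inj_fst] by (simp add: case_prod_unfold)
  have "(\<Sum>p\<in>S1 O S2. ?d p) \<le> (\<Sum>p\<in>{p\<in>S1. snd p \<in> fst ` S2}. ?d p) + (\<Sum>q\<in>snd ` T. ?d q)"
    unfolding sum_comp sum_P1 sum.reindex[OF inj_snd] sum.distrib[symmetric]
  proof (rule sum_mono, goal_cases)
    case (1 x)
    then have "snd (fst x) = fst (snd x)" by (simp add: T_def case_prod_unfold)
    then show ?case by (simp add: case_prod_unfold)
  qed
  also have "(\<Sum>q\<in>snd ` T. ?d q) \<le> (\<Sum>q\<in>S2. ?d q)"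
    by (intro sum_mono2[OF fin2 P2S]) simp
  finally show "(\<Sum>p\<in>S1 O S2. ?d p) \<le> (\<Sum>p\<in>{p\<in>S1. snd p \<in> fst ` S2}. ?d p) + (\<Sum>q\<in>S2. ?d q)"
    by simp
  show "(\<Sum>p\<in>S1 O S2. blen (fst p)) = (\<Sum>p\<in>{p\<in>S1. snd p \<in> fst ` S2}. blen (fst p))"
    unfolding sum_comp sum_P1 by (simp add: case_prod_unfold)
qed

text \<open>The blocks of \<open>\<gamma>\<close> matched by \<open>S1\<close> but not by \<open>S2\<close> are disjoint from those matched by
  \<open>S2\<close>, which bounds their total length.\<close>

lemma length_defect_relcomp_le:
  assumes \<gamma>: "IP_of \<gamma> L\<gamma>" and S1: "matching \<beta> \<gamma> S1" and S2: "matching \<gamma> \<delta> S2"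
  shows "length_defect L\<beta> (S1 O S2) \<le> length_defect L\<beta> S1 + length_defect L\<gamma> S2"
proof -
  let ?d = "\<lambda>p. \<bar>blen (fst p) - blen (snd p)\<bar>"
  define P1 where "P1 = {p\<in>S1. snd p \<in> fst ` S2}"
  have fin1: "finite S1" and fin2: "finite S2" and sub1: "S1 \<subseteq> \<beta> \<times> \<gamma>" and sub2: "S2 \<subseteq> \<gamma> \<times> \<delta>"
    using S1 S2 by (auto simp: matching_def)
  have split1: "(\<Sum>p\<in>S1. f p) = (\<Sum>p\<in>P1. f p) + (\<Sum>p\<in>S1 - P1. f p)" for f :: "_ \<Rightarrow> real"
    using sum.subset_diff[of P1 S1 f] fin1 by (simp add: P1_def)
  have unmatched: "(\<Sum>p\<in>S1 - P1. blen (fst p)) \<le> (\<Sum>p\<in>S1 - P1. ?d p) + (\<Sum>p\<in>S1 - P1. blen (snd p))"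
    unfolding sum.distrib[symmetric] by (intro sum_mono) linarith
  have "snd ` (S1 - P1) \<inter> fst ` S2 = {}" unfolding P1_def by blast
  then have "(\<Sum>V\<in>snd ` (S1 - P1) \<union> fst ` S2. blen V)
      = (\<Sum>V\<in>snd ` (S1 - P1). blen V) + (\<Sum>V\<in>fst ` S2. blen V)"
    using fin1 fin2 by (intro sum.union_disjoint) auto
  moreover have "snd ` (S1 - P1) \<union> fst ` S2 \<subseteq> \<gamma>" using sub1 sub2 by force
  then have "(\<Sum>V\<in>snd ` (S1 - P1) \<union> fst ` S2. blen V) \<le> L\<gamma>"
    using fin1 fin2 by (intro IP_of_sum_blen_le[OF \<gamma>]) auto
  ultimately have middle: "(\<Sum>p\<in>S1 - P1. blen (snd p)) + (\<Sum>p\<in>S2. blen (fst p)) \<le> L\<gamma>"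
    unfolding matching_sum_snd[OF S1 Diff_subset] matching_sum_fst[OF S2 order_refl] by simp
  show ?thesis
    unfolding length_defect_def using matching_relcomp_sums[OF S1 S2, folded P1_def] unmatched middle
      split1[of ?d] split1[of "\<lambda>p. blen (fst p)"]
    by linarith
qed

lemma matching_distortion_relcomp_le:
  assumes \<gamma>: "IP_of \<gamma> L\<gamma>" and S1: "matching \<beta> \<gamma> S1" and S2: "matching \<gamma> \<delta> S2"
  shows "matching_distortion \<alpha> \<beta> \<delta> (S1 O S2)
    \<le> matching_distortion \<alpha> \<beta> \<gamma> S1 + matching_distortion \<alpha> \<gamma> \<delta> S2"
proof -
  have fin1: "finite S1" and fin2: "finite S2" using S1 S2 by (auto simp: matching_def)
  note D1 = matching_distortion_ge[OF fin1, where \<alpha> = \<alpha> and \<beta> = \<beta> and \<gamma> = \<gamma>]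
  note D2 = matching_distortion_ge[OF fin2, where \<alpha> = \<alpha> and \<beta> = \<gamma> and \<gamma> = \<delta>]
  have "length_defect (IPlen \<delta>) (converse (S1 O S2))
      \<le> length_defect (IPlen \<delta>) (converse S2) + length_defect (IPlen \<gamma>) (converse S1)"
    unfolding converse_relcomp IPlen_eqI[OF \<gamma>]
    by (rule length_defect_relcomp_le[OF \<gamma> matching_converse[OF S2] matching_converse[OF S1]])
  moreover have "length_defect (IPlen \<beta>) (S1 O S2)
      \<le> length_defect (IPlen \<beta>) S1 + length_defect (IPlen \<gamma>) S2"
    unfolding IPlen_eqI[OF \<gamma>] by (rule length_defect_relcomp_le[OF \<gamma> S1 S2])
  moreover have "\<bar>div_block \<alpha> \<beta> (fst p) - div_block \<alpha> \<delta> (snd p)\<bar>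
      \<le> matching_distortion \<alpha> \<beta> \<gamma> S1 + matching_distortion \<alpha> \<gamma> \<delta> S2" if "p \<in> S1 O S2" for p
  proof -
    obtain U V W where "(U, V) \<in> S1" "(V, W) \<in> S2" "p = (U, W)" using \<open>p \<in> S1 O S2\<close> by blast
    then show ?thesis using D1(4)[of "(U, V)"] D2(4)[of "(V, W)"] by simp
  qed
  ultimately show ?thesis
    using fin1 fin2 D1 D2 by (intro matching_distortion_le) auto
qed

lemma d_alpha_triangle:
  assumes "IP_of \<gamma> L\<gamma>"
  shows "d_alpha \<alpha> \<beta> \<delta> \<le> d_alpha \<alpha> \<beta> \<gamma> + d_alpha \<alpha> \<gamma> \<delta>"
proof (rule field_le_epsilon)
  fix e :: real assume "0 < e"
  obtain S1 where S1: "matching \<beta> \<gamma> S1" "matching_distortion \<alpha> \<beta> \<gamma> S1 < d_alpha \<alpha> \<beta> \<gamma> + e / 2"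
    using d_alpha_lessE[of \<alpha> \<beta> \<gamma> "d_alpha \<alpha> \<beta> \<gamma> + e / 2"] \<open>0 < e\<close> by auto
  obtain S2 where S2: "matching \<gamma> \<delta> S2" "matching_distortion \<alpha> \<gamma> \<delta> S2 < d_alpha \<alpha> \<gamma> \<delta> + e / 2"
    using d_alpha_lessE[of \<alpha> \<gamma> \<delta> "d_alpha \<alpha> \<gamma> \<delta> + e / 2"] \<open>0 < e\<close> by auto
  have "d_alpha \<alpha> \<beta> \<delta> \<le> matching_distortion \<alpha> \<beta> \<delta> (S1 O S2)"
    by (rule d_alpha_le_matching_distortion[OF matching_relcomp[OF S1(1) S2(1)]])
  also have "\<dots> \<le> matching_distortion \<alpha> \<beta> \<gamma> S1 + matching_distortion \<alpha> \<gamma> \<delta> S2"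
    by (rule matching_distortion_relcomp_le[OF assms S1(1) S2(1)])
  finally show "d_alpha \<alpha> \<beta> \<delta> \<le> d_alpha \<alpha> \<beta> \<gamma> + d_alpha \<alpha> \<gamma> \<delta> + e"
    using S1(2) S2(2) by linarith
qed

lemma IPalpha_IP_of: "\<beta> \<in> IPalpha \<alpha> \<Longrightarrow> IP_of \<beta> (IPlen \<beta>)"
  unfolding IPalpha_def interval_partition_def using IPlen_eqI by auto

lemma IPalphaI: "IP_of \<beta> L \<Longrightarrow> has_diversity \<alpha> \<beta> \<Longrightarrow> \<beta> \<in> IPalpha \<alpha>"
  unfolding IPalpha_def interval_partition_def by blast

lemma IPalpha_has_diversity: "\<beta> \<in> IPalpha \<alpha> \<Longrightarrow> has_diversity \<alpha> \<beta>"
  by (simp add: IPalpha_def)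

lemma IPalpha_metric: "Metric_space (IPalpha \<alpha>) (d_alpha \<alpha>)"
proof
  show "0 \<le> d_alpha \<alpha> \<beta> \<gamma>" for \<beta> \<gamma> by (rule d_alpha_nonneg)
  show "d_alpha \<alpha> \<beta> \<gamma> = d_alpha \<alpha> \<gamma> \<beta>" for \<beta> \<gamma> by (rule d_alpha_commute)
  fix \<beta> \<gamma> assume \<beta>: "\<beta> \<in> IPalpha \<alpha>" and \<gamma>: "\<gamma> \<in> IPalpha \<alpha>"
  show "d_alpha \<alpha> \<beta> \<gamma> = 0 \<longleftrightarrow> \<beta> = \<gamma>"
    using d_alpha_zero_imp_eq[OF IPalpha_IP_of[OF \<beta>] IPalpha_IP_of[OF \<gamma>]]
      d_alpha_self[OF IPalpha_IP_of[OF \<beta>]] by auto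
  fix \<delta>
  show "d_alpha \<alpha> \<beta> \<delta> \<le> d_alpha \<alpha> \<beta> \<gamma> + d_alpha \<alpha> \<gamma> \<delta>"
    by (rule d_alpha_triangle[OF IPalpha_IP_of[OF \<gamma>]])
qed

section \<open>Scaling and path-connectedness\<close>

lemma diversity_eqI:
  assumes "((\<lambda>h. h powr \<alpha> * div_count \<beta> t h) \<longlongrightarrow> l) (at_right 0)"
  shows "diversity \<alpha> \<beta> t = Gamma (1 - \<alpha>) * l"
  unfolding diversity_def using tendsto_Lim[OF _ assms] by simp

lemma has_diversity_tendsto:
  assumes "has_diversity \<alpha> \<beta>" "t \<in> {0..IPlen \<beta>}"
  shows "((\<lambda>h. h powr \<alpha> * div_count \<beta> t h) \<longlongrightarrow> Lim (at_right 0) (\<lambda>h. h powr \<alpha> * div_count \<beta> t h))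
    (at_right 0)"
proof -
  obtain l where l: "((\<lambda>h. h powr \<alpha> * div_count \<beta> t h) \<longlongrightarrow> l) (at_right 0)"
    using assms unfolding has_diversity_def by blast
  then show ?thesis using tendsto_Lim[OF _ l] by simp
qed

lemma div_count_nonneg: "0 \<le> div_count \<beta> t h"
  by (simp add: div_count_def)

lemma div_count_mono:
  assumes "IP_of \<beta> L" "0 < h" "t \<le> t'"
  shows "div_count \<beta> t h \<le> div_count \<beta> t' h"
  unfolding div_count_def
  by (intro of_nat_mono card_mono[OF finite_div_count_set[OF assms(1,2)]]) (use assms(3) in auto)

lemma diversity_mono:
  assumes \<beta>: "IP_of \<beta> L" and div: "has_diversity \<alpha> \<beta>" and "\<alpha> < 1"
    and t: "0 \<le> t" "t \<le> t'" "t' \<le> L"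
  shows "0 \<le> diversity \<alpha> \<beta> t" "diversity \<alpha> \<beta> t \<le> diversity \<alpha> \<beta> t'"
proof -
  have G: "0 < Gamma (1 - \<alpha>)" using \<open>\<alpha> < 1\<close> by (intro Gamma_real_pos) simp
  have ev: "eventually (\<lambda>h. 0 < h) (at_right (0::real))" by (rule eventually_at_right_less)
  note l = has_diversity_tendsto[OF div, of t] has_diversity_tendsto[OF div, of t']
  have "0 \<le> Lim (at_right 0) (\<lambda>h. h powr \<alpha> * div_count \<beta> t h)"
    by (rule tendsto_lowerbound[OF l(1)]) (use t IPlen_eqI[OF \<beta>] in \<open>auto simp: div_count_nonneg\<close>)
  then show "0 \<le> diversity \<alpha> \<beta> t" unfolding diversity_def using G by simp
  have "Lim (at_right 0) (\<lambda>h. h powr \<alpha> * div_count \<beta> t h)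
      \<le> Lim (at_right 0) (\<lambda>h. h powr \<alpha> * div_count \<beta> t' h)"
  proof (rule tendsto_le[OF _ l(2) l(1)])
    show "eventually (\<lambda>h. h powr \<alpha> * div_count \<beta> t h \<le> h powr \<alpha> * div_count \<beta> t' h) (at_right 0)"
      using ev by eventually_elim (intro mult_left_mono div_count_mono[OF \<beta> _ t(2)], auto)
  qed (use t IPlen_eqI[OF \<beta>] in auto)
  then show "diversity \<alpha> \<beta> t \<le> diversity \<alpha> \<beta> t'" unfolding diversity_def using G by simp
qed

lemma div_block_bounds:
  assumes \<beta>: "IP_of \<beta> L" and div: "has_diversity \<alpha> \<beta>" and "\<alpha> < 1" and U: "U \<in> \<beta>"
  shows "0 \<le> div_block \<alpha> \<beta> U" "div_block \<alpha> \<beta> U \<le> div_inf \<alpha> \<beta>"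
proof -
  have m: "0 \<le> (fst U + snd U) / 2" "(fst U + snd U) / 2 \<le> L" using IP_ofD(2)[OF \<beta> U] by auto
  show "0 \<le> div_block \<alpha> \<beta> U" unfolding div_block_def
    using diversity_mono(1)[OF \<beta> div \<open>\<alpha> < 1\<close> m(1) order_refl m(2)] .
  show "div_block \<alpha> \<beta> U \<le> div_inf \<alpha> \<beta>" unfolding div_block_def div_inf_def IPlen_eqI[OF \<beta>]
    using diversity_mono(2)[OF \<beta> div \<open>\<alpha> < 1\<close> m order_refl] .
qed

lemma div_block_sorted_mono:
  assumes \<beta>: "IP_of \<beta> L" and div: "has_diversity \<alpha> \<beta>" and "\<alpha> < 1"
    and us: "set us \<subseteq> \<beta>" "sorted_wrt (\<lambda>U V. fst U < fst V) us" and ij: "i \<le> j" "j < length us"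
  shows "div_block \<alpha> \<beta> (us ! i) \<le> div_block \<alpha> \<beta> (us ! j)"
proof (cases "i = j")
  case False
  have U: "us ! i \<in> \<beta>" "us ! j \<in> \<beta>" using us(1) ij by auto
  have "fst (us ! i) < fst (us ! j)" using sorted_wrt_nth_less[OF us(2)] ij False by simp
  then have "snd (us ! i) \<le> fst (us ! j)" by (rule IP_of_snd_le_fst[OF \<beta> U(2) U(1)])
  then show ?thesis
    using IP_ofD(2)[OF \<beta> U(1)] IP_ofD(2)[OF \<beta> U(2)] unfolding div_block_def
    by (intro diversity_mono(2)[OF \<beta> div \<open>\<alpha> < 1\<close>]) auto
qed simp

lemma div_inf_nonneg:
  assumes "IP_of \<beta> L" "has_diversity \<alpha> \<beta>" "\<alpha> < 1"
  shows "0 \<le> div_inf \<alpha> \<beta>"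
  unfolding div_inf_def IPlen_eqI[OF assms(1)]
  using diversity_mono(1)[OF assms _ order_refl order_refl] IP_ofD(1)[OF assms(1)] by simp

lemma diversity_profile:
  assumes \<beta>: "IP_of \<beta> L" and div: "has_diversity \<alpha> \<beta>" and "\<alpha> < 1"
    and us: "set us \<subseteq> \<beta>" "sorted_wrt (\<lambda>U V. fst U < fst V) us"
  defines "D \<equiv> \<lambda>i. if i < length us then div_block \<alpha> \<beta> (us ! i) else div_inf \<alpha> \<beta>"
  shows "0 \<le> D i" and "i \<le> j \<Longrightarrow> j \<le> length us \<Longrightarrow> D i \<le> D j"
proof -
  have U: "us ! i \<in> \<beta>" if "i < length us" for i using that us(1) by auto
  show "0 \<le> D i"
    using div_block_bounds(1)[OF \<beta> div \<open>\<alpha> < 1\<close> U] div_inf_nonneg[OF \<beta> div \<open>\<alpha> < 1\<close>] by (simp add: D_def)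
  assume "i \<le> j" "j \<le> length us"
  then show "D i \<le> D j"
    using div_block_bounds(2)[OF \<beta> div \<open>\<alpha> < 1\<close> U] div_block_sorted_mono[OF \<beta> div \<open>\<alpha> < 1\<close> us, of i j]
    by (cases "j = length us") (auto simp: D_def)
qed

lemma IP_of_empty: "IP_of {} 0"
  by (rule IP_ofI) auto

lemma IPalpha_empty: "{} \<in> IPalpha \<alpha>"
  using IP_of_empty IPlen_eqI[OF IP_of_empty]
  by (intro IPalphaI) (auto simp: has_diversity_def div_count_def)

lemma div_inf_empty: "div_inf \<alpha> {} = 0"
  using diversity_eqI[of \<alpha> "{}" _ 0] by (simp add: div_inf_def div_count_def)

lemma null_sets_scale:
  fixes N :: "real set" and c :: real
  assumes "N \<in> null_sets lborel" "0 < c"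
  shows "{x. x / c \<in> N} \<in> null_sets lborel"
proof -
  have [measurable]: "N \<in> sets borel" using assms(1) by (auto dest: null_setsD2)
  have "AE x in lborel. x \<notin> N" using assms(1) by (rule AE_not_in)
  then have "AE x in lborel. 0 + (1 / c) * x \<notin> N"
    using assms(2) by (intro AE_borel_affine) auto
  then show ?thesis by (simp add: AE_iff_null_sets)
qed

definition scale_block :: "real \<Rightarrow> real \<times> real \<Rightarrow> real \<times> real" where
  "scale_block c U = (c * fst U, c * snd U)"

definition scale_IP :: "real \<Rightarrow> (real \<times> real) set \<Rightarrow> (real \<times> real) set" where
  "scale_IP c \<beta> = scale_block c ` \<beta>"

lemma blen_scale_block: "blen (scale_block c U) = c * blen U"
  by (simp add: blen_def scale_block_def algebra_simps)

lemma scale_block_inj: "0 < c \<Longrightarrow> inj_on (scale_block c) A"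
  by (auto simp: inj_on_def scale_block_def prod_eq_iff)

lemma block_ivl_scale_block: "0 < c \<Longrightarrow> x \<in> block_ivl (scale_block c U) \<longleftrightarrow> x / c \<in> block_ivl U"
  by (auto simp: block_ivl_def scale_block_def field_simps)

lemma IP_of_scale:
  assumes \<beta>: "IP_of \<beta> L" and c: "0 < c"
  shows "IP_of (scale_IP c \<beta>) (c * L)"
proof (rule IP_ofI)
  show "0 \<le> c * L" using IP_ofD(1)[OF \<beta>] c by simp
  show "0 \<le> fst W \<and> fst W < snd W \<and> snd W \<le> c * L" if "W \<in> scale_IP c \<beta>" for W
    using that IP_ofD(2)[OF \<beta>] c by (auto simp: scale_IP_def scale_block_def)
  show "block_ivl W \<inter> block_ivl W' = {}" if "W \<in> scale_IP c \<beta>" "W' \<in> scale_IP c \<beta>" "W \<noteq> W'" for W W'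
    using that IP_ofD(3)[OF \<beta>] block_ivl_scale_block[OF c] unfolding scale_IP_def by blast
  have "{0..c * L} - (\<Union>W\<in>scale_IP c \<beta>. block_ivl W) = {x. x / c \<in> {0..L} - (\<Union>U\<in>\<beta>. block_ivl U)}"
    using c block_ivl_scale_block[OF c] by (auto simp: scale_IP_def field_simps)
  then show "{0..c * L} - (\<Union>W\<in>scale_IP c \<beta>. block_ivl W) \<in> null_sets lborel"
    using null_sets_scale[OF IP_ofD(4)[OF \<beta>] c] by simp
qed

lemma IPlen_scale: "IP_of \<beta> L \<Longrightarrow> 0 < c \<Longrightarrow> IPlen (scale_IP c \<beta>) = c * L"
  using IP_of_scale IPlen_eqI by blast

lemma div_count_scale:
  assumes c: "0 < c"
  shows "div_count (scale_IP c \<beta>) (c * t) h = div_count \<beta> t (h / c)"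
proof -
  have "{(a,b)\<in>scale_IP c \<beta>. b - a > h \<and> b \<le> c * t} = scale_block c ` {(a,b)\<in>\<beta>. b - a > h / c \<and> b \<le> t}"
    using c by (force simp: scale_IP_def scale_block_def field_simps)
  then show ?thesis unfolding div_count_def by (simp add: card_image[OF scale_block_inj[OF c]])
qed

lemma tendsto_powr_mult_scale:
  fixes f :: "real \<Rightarrow> real"
  assumes lim: "((\<lambda>h. h powr \<alpha> * f h) \<longlongrightarrow> l) (at_right 0)" and c: "0 < c"
  shows "((\<lambda>h. h powr \<alpha> * f (h / c)) \<longlongrightarrow> c powr \<alpha> * l) (at_right 0)"
proof -
  have "filterlim (\<lambda>h. h / c) (at_right 0) (at_right 0)"
    using c by (auto intro!: filterlim_at_withinI tendsto_eq_intros eventually_at_rightI[of 0 1])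
  then have "((\<lambda>h. c powr \<alpha> * ((h / c) powr \<alpha> * f (h / c))) \<longlongrightarrow> c powr \<alpha> * l) (at_right 0)"
    by (intro tendsto_mult_left filterlim_compose[OF lim])
  moreover have "eventually (\<lambda>h. c powr \<alpha> * ((h / c) powr \<alpha> * f (h / c)) = h powr \<alpha> * f (h / c)) (at_right 0)"
    using eventually_at_right_less[of "0::real"]
    by eventually_elim (use c in \<open>simp add: powr_divide mult.assoc[symmetric]\<close>)
  ultimately show ?thesis by (rule Lim_transform_eventually)
qed

lemma has_diversity_scale:
  assumes \<beta>: "IP_of \<beta> L" and div: "has_diversity \<alpha> \<beta>" and c: "0 < c"
  shows "has_diversity \<alpha> (scale_IP c \<beta>)"
  unfolding has_diversity_def
proof
  fix t assume "t \<in> {0..IPlen (scale_IP c \<beta>)}"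
  then have "t / c \<in> {0..IPlen \<beta>}" using c IPlen_scale[OF \<beta> c] IPlen_eqI[OF \<beta>]
    by (auto simp: field_simps)
  from tendsto_powr_mult_scale[OF has_diversity_tendsto[OF div this] c]
  show "\<exists>l. ((\<lambda>h. h powr \<alpha> * div_count (scale_IP c \<beta>) t h) \<longlongrightarrow> l) (at_right 0)"
    using c by (auto simp: div_count_scale[OF c, symmetric])
qed

lemma IPalpha_scale: "\<beta> \<in> IPalpha \<alpha> \<Longrightarrow> 0 < c \<Longrightarrow> scale_IP c \<beta> \<in> IPalpha \<alpha>"
  using IP_of_scale has_diversity_scale IPalpha_IP_of IPalpha_has_diversity IPalphaI by metis

lemma diversity_scale:
  assumes \<beta>: "IP_of \<beta> L" and div: "has_diversity \<alpha> \<beta>" and c: "0 < c" and t: "t \<in> {0..L}"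
  shows "diversity \<alpha> (scale_IP c \<beta>) (c * t) = c powr \<alpha> * diversity \<alpha> \<beta> t"
proof -
  have "t \<in> {0..IPlen \<beta>}" using t IPlen_eqI[OF \<beta>] by simp
  from tendsto_powr_mult_scale[OF has_diversity_tendsto[OF div this] c]
  have lim: "((\<lambda>h. h powr \<alpha> * div_count (scale_IP c \<beta>) (c * t) h)
      \<longlongrightarrow> c powr \<alpha> * Lim (at_right 0) (\<lambda>h. h powr \<alpha> * div_count \<beta> t h)) (at_right 0)"
    by (simp add: div_count_scale[OF c])
  show ?thesis unfolding diversity_eqI[OF lim] by (simp add: diversity_def)
qed

lemma div_block_scale:
  assumes \<beta>: "IP_of \<beta> L" and div: "has_diversity \<alpha> \<beta>" and c: "0 < c" and U: "U \<in> \<beta>"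
  shows "div_block \<alpha> (scale_IP c \<beta>) (scale_block c U) = c powr \<alpha> * div_block \<alpha> \<beta> U"
proof -
  have "(fst U + snd U) / 2 \<in> {0..L}" using IP_ofD(2)[OF \<beta> U] by auto
  moreover have "(fst (scale_block c U) + snd (scale_block c U)) / 2 = c * ((fst U + snd U) / 2)"
    by (simp add: scale_block_def algebra_simps)
  ultimately show ?thesis unfolding div_block_def using diversity_scale[OF \<beta> div c] by presburger
qed

lemma div_inf_scale:
  assumes \<beta>: "IP_of \<beta> L" and div: "has_diversity \<alpha> \<beta>" and c: "0 < c"
  shows "div_inf \<alpha> (scale_IP c \<beta>) = c powr \<alpha> * div_inf \<alpha> \<beta>"
  unfolding div_inf_def IPlen_scale[OF \<beta> c] IPlen_eqI[OF \<beta>]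
  using diversity_scale[OF \<beta> div c] IP_ofD(1)[OF \<beta>] by simp

lemma div_block_scale_diff_le:
  assumes \<beta>: "IP_of \<beta> L" and div: "has_diversity \<alpha> \<beta>" and "\<alpha> < 1" and "0 < s" "0 < s'" and U: "U \<in> \<beta>"
  shows "\<bar>div_block \<alpha> (scale_IP s \<beta>) (scale_block s U) - div_block \<alpha> (scale_IP s' \<beta>) (scale_block s' U)\<bar>
    \<le> \<bar>s powr \<alpha> - s' powr \<alpha>\<bar> * div_inf \<alpha> \<beta>"
proof -
  have "\<bar>div_block \<alpha> (scale_IP s \<beta>) (scale_block s U) - div_block \<alpha> (scale_IP s' \<beta>) (scale_block s' U)\<bar>
      = \<bar>s powr \<alpha> - s' powr \<alpha>\<bar> * div_block \<alpha> \<beta> U"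
    using div_block_bounds(1)[OF \<beta> div \<open>\<alpha> < 1\<close> U] assms(4,5)
    by (simp add: div_block_scale[OF \<beta> div _ U] left_diff_distrib[symmetric] abs_mult)
  also have "\<dots> \<le> \<bar>s powr \<alpha> - s' powr \<alpha>\<bar> * div_inf \<alpha> \<beta>"
    by (intro mult_left_mono div_block_bounds(2)[OF \<beta> div \<open>\<alpha> < 1\<close> U]) simp
  finally show ?thesis .
qed

lemma scaled_diagonal_matching:
  assumes \<beta>: "IP_of \<beta> L" and F: "finite F" "F \<subseteq> \<beta>" "L - \<eta> < (\<Sum>U\<in>F. blen U)"
    and s: "0 < s" "s \<le> 1" and s': "0 < s'" "s' \<le> 1"
  defines "S \<equiv> (\<lambda>U. (scale_block s U, scale_block s' U)) ` F"
  shows "matching (scale_IP s \<beta>) (scale_IP s' \<beta>) S"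
    and "length_defect (s * L) S \<le> \<bar>s - s'\<bar> * L + \<eta>"
    and "length_defect (s' * L) (converse S) \<le> \<bar>s - s'\<bar> * L + \<eta>"
proof -
  show "matching (scale_IP s \<beta>) (scale_IP s' \<beta>) S"
    unfolding matching_def S_def scale_IP_def
    using F s s' IP_of_inj_on_fst[OF \<beta> F(2)]
    by (auto intro!: increasing_pairs_image simp: scale_block_def)
  have FL: "(\<Sum>U\<in>F. blen U) \<le> L" by (rule IP_of_sum_blen_le[OF \<beta> F(1,2)])
  have sums: "(\<Sum>p\<in>S. f p) = (\<Sum>U\<in>F. f (scale_block s U, scale_block s' U))" for f :: "_ \<Rightarrow> real"
    unfolding S_def using scale_block_inj[OF s(1)] by (simp add: sum.reindex inj_on_def)
  have abs_sum: "(\<Sum>p\<in>S. \<bar>blen (fst p) - blen (snd p)\<bar>) = \<bar>s - s'\<bar> * (\<Sum>U\<in>F. blen U)"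
    unfolding sums sum_distrib_left
  proof (rule sum.cong[OF refl])
    fix U assume "U \<in> F"
    then have "0 < blen U" using IP_of_blen_pos[OF \<beta>] F(2) by blast
    then show "\<bar>blen (fst (scale_block s U, scale_block s' U)) - blen (snd (scale_block s U, scale_block s' U))\<bar>
        = \<bar>s - s'\<bar> * blen U"
      by (simp add: blen_scale_block abs_mult left_diff_distrib[symmetric])
  qed
  have "s * (L - (\<Sum>U\<in>F. blen U)) \<le> L - (\<Sum>U\<in>F. blen U)"
    "s' * (L - (\<Sum>U\<in>F. blen U)) \<le> L - (\<Sum>U\<in>F. blen U)"
    using s s' FL by (simp_all add: mult_left_le_one_le)
  moreover have "\<bar>s - s'\<bar> * (\<Sum>U\<in>F. blen U) \<le> \<bar>s - s'\<bar> * L" using FL by (simp add: mult_left_mono)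
  ultimately show "length_defect (s * L) S \<le> \<bar>s - s'\<bar> * L + \<eta>"
    "length_defect (s' * L) (converse S) \<le> \<bar>s - s'\<bar> * L + \<eta>"
    unfolding length_defect_converse unfolding length_defect_def abs_sum
    using F(3) by (auto simp: sums blen_scale_block sum_distrib_left[symmetric] algebra_simps)
qed

lemma d_alpha_scale_le:
  assumes \<beta>: "IP_of \<beta> L" and div: "has_diversity \<alpha> \<beta>" and "\<alpha> < 1"
    and s: "0 < s" "s \<le> 1" and s': "0 < s'" "s' \<le> 1"
  shows "d_alpha \<alpha> (scale_IP s \<beta>) (scale_IP s' \<beta>)
    \<le> \<bar>s - s'\<bar> * L + \<bar>s powr \<alpha> - s' powr \<alpha>\<bar> * div_inf \<alpha> \<beta>"
    (is "_ \<le> ?B")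
proof (rule field_le_epsilon)
  fix \<eta> :: real assume \<eta>: "0 < \<eta>"
  have D0: "0 \<le> div_inf \<alpha> \<beta>" by (rule div_inf_nonneg[OF \<beta> div \<open>\<alpha> < 1\<close>])
  then have D: "0 \<le> \<bar>s powr \<alpha> - s' powr \<alpha>\<bar> * div_inf \<alpha> \<beta>" by simp
  obtain F where F: "finite F" "F \<subseteq> \<beta>" "L - \<eta> < (\<Sum>U\<in>F. blen U)"
    using IP_of_finite_blocks_cover[OF \<beta> \<eta>] .
  define S where "S = (\<lambda>U. (scale_block s U, scale_block s' U)) ` F"
  note diag = scaled_diagonal_matching[OF \<beta> F s s', folded S_def]
  have S: "matching (scale_IP s \<beta>) (scale_IP s' \<beta>) S" by (rule diag(1))
  have LD: "length_defect (s * L) S \<le> ?B + \<eta>" "length_defect (s' * L) (converse S) \<le> ?B + \<eta>"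
    using diag(2,3) D by linarith+
  have D_inf: "\<bar>div_inf \<alpha> (scale_IP s \<beta>) - div_inf \<alpha> (scale_IP s' \<beta>)\<bar>
      = \<bar>s powr \<alpha> - s' powr \<alpha>\<bar> * div_inf \<alpha> \<beta>"
    using D0 by (simp add: div_inf_scale[OF \<beta> div] s s' left_diff_distrib[symmetric] abs_mult)
  have D_block: "\<bar>div_block \<alpha> (scale_IP s \<beta>) (fst p) - div_block \<alpha> (scale_IP s' \<beta>) (snd p)\<bar>
      \<le> \<bar>s powr \<alpha> - s' powr \<alpha>\<bar> * div_inf \<alpha> \<beta>" if p: "p \<in> S" for p
  proof -
    obtain U where "U \<in> \<beta>" "p = (scale_block s U, scale_block s' U)"
      using p F(2) unfolding S_def by blast
    then show ?thesis using div_block_scale_diff_le[OF \<beta> div \<open>\<alpha> < 1\<close> s(1) s'(1)] by simp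
  qed
  have "0 \<le> \<bar>s - s'\<bar> * L" using IP_ofD(1)[OF \<beta>] by simp
  have "matching_distortion \<alpha> (scale_IP s \<beta>) (scale_IP s' \<beta>) S \<le> ?B + \<eta>"
  proof (rule matching_distortion_le)
    show "finite S" using S by (simp add: matching_def)
    show "length_defect (IPlen (scale_IP s \<beta>)) S \<le> ?B + \<eta>"
      using LD(1) IPlen_scale[OF \<beta> s(1)] by simp
    show "length_defect (IPlen (scale_IP s' \<beta>)) (converse S) \<le> ?B + \<eta>"
      using LD(2) IPlen_scale[OF \<beta> s'(1)] by simp
    show "\<bar>div_inf \<alpha> (scale_IP s \<beta>) - div_inf \<alpha> (scale_IP s' \<beta>)\<bar> \<le> ?B + \<eta>"
      using D_inf \<open>0 \<le> \<bar>s - s'\<bar> * L\<close> \<eta> by simp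
    show "\<bar>div_block \<alpha> (scale_IP s \<beta>) (fst p) - div_block \<alpha> (scale_IP s' \<beta>) (snd p)\<bar> \<le> ?B + \<eta>"
      if "p \<in> S" for p
      using D_block[OF that] \<open>0 \<le> \<bar>s - s'\<bar> * L\<close> \<eta> by simp
  qed
  then show "d_alpha \<alpha> (scale_IP s \<beta>) (scale_IP s' \<beta>) \<le> ?B + \<eta>"
    using d_alpha_le_matching_distortion[OF S, where \<alpha> = \<alpha>] by simp
qed

lemma d_alpha_scale_empty_le:
  assumes \<beta>: "IP_of \<beta> L" and div: "has_diversity \<alpha> \<beta>" and "\<alpha> < 1" and s: "0 < s"
  shows "d_alpha \<alpha> (scale_IP s \<beta>) {} \<le> s * L + s powr \<alpha> * div_inf \<alpha> \<beta>"
proof -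
  have "0 \<le> div_inf \<alpha> \<beta>" "0 \<le> L"
    using div_inf_nonneg[OF \<beta> div \<open>\<alpha> < 1\<close>] IP_ofD(1)[OF \<beta>] by auto
  then have "matching_distortion \<alpha> (scale_IP s \<beta>) {} {} \<le> s * L + s powr \<alpha> * div_inf \<alpha> \<beta>"
    using s by (intro matching_distortion_le)
      (auto simp: length_defect_def IPlen_scale[OF \<beta>] IPlen_eqI[OF IP_of_empty] div_inf_scale[OF \<beta> div]
        div_inf_empty)
  then show ?thesis
    using d_alpha_le_matching_distortion[OF matching_empty, where \<alpha> = \<alpha> and \<beta> = "scale_IP s \<beta>" and \<gamma> = "{}"]
    by simp
qed

text \<open>The endpoint \<open>s = 0\<close> is treated separately: \<open>scale_IP 0 \<beta>\<close> would consist of degenerate blocks.\<close>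

definition shrink_path :: "(real \<times> real) set \<Rightarrow> real \<Rightarrow> (real \<times> real) set" where
  "shrink_path \<beta> s = (if s = 0 then {} else scale_IP s \<beta>)"

lemma shrink_path_in_IPalpha: "\<beta> \<in> IPalpha \<alpha> \<Longrightarrow> 0 \<le> s \<Longrightarrow> shrink_path \<beta> s \<in> IPalpha \<alpha>"
  using IPalpha_empty IPalpha_scale by (auto simp: shrink_path_def)

lemma d_alpha_shrink_path_le:
  assumes \<beta>: "IP_of \<beta> L" and div: "has_diversity \<alpha> \<beta>" and "0 < \<alpha>" "\<alpha> < 1"
    and s: "0 \<le> s" "s \<le> 1" and s': "0 \<le> s'" "s' \<le> 1"
  shows "d_alpha \<alpha> (shrink_path \<beta> s) (shrink_path \<beta> s')
    \<le> \<bar>s - s'\<bar> * L + \<bar>s powr \<alpha> - s' powr \<alpha>\<bar> * div_inf \<alpha> \<beta>"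
proof -
  have "0 \<le> div_inf \<alpha> \<beta>" "0 \<le> L"
    using div_inf_nonneg[OF \<beta> div \<open>\<alpha> < 1\<close>] IP_ofD(1)[OF \<beta>] by auto
  then show ?thesis
    using d_alpha_scale_le[OF \<beta> div \<open>\<alpha> < 1\<close>, of s s'] d_alpha_scale_empty_le[OF \<beta> div \<open>\<alpha> < 1\<close>]
      d_alpha_commute[of \<alpha> "{}"] d_alpha_self[OF IP_of_empty] s s'
    by (cases "s = 0"; cases "s' = 0") (auto simp: shrink_path_def)
qed

lemma pathin_shrink_path:
  assumes \<alpha>: "0 < \<alpha>" "\<alpha> < 1" and \<beta>: "\<beta> \<in> IPalpha \<alpha>"
  shows "pathin (Metric_space.mtopology (IPalpha \<alpha>) (d_alpha \<alpha>)) (shrink_path \<beta>)"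
proof -
  interpret M: Metric_space "IPalpha \<alpha>" "d_alpha \<alpha>" by (rule IPalpha_metric)
  show ?thesis unfolding pathin_def M.continuous_map_to_metric
  proof (intro ballI allI impI)
    fix x e assume "x \<in> topspace (subtopology euclideanreal {0..1})" and e: "(0::real) < e"
    then have x: "0 \<le> x" "x \<le> 1" by auto
    define \<phi> where "\<phi> y = \<bar>y - x\<bar> * IPlen \<beta> + \<bar>y powr \<alpha> - x powr \<alpha>\<bar> * div_inf \<alpha> \<beta>" for y
    have "continuous_on {0..1} (\<lambda>y::real. y powr \<alpha>)"
      using \<alpha> by (intro continuous_on_powr' continuous_on_id continuous_on_const) auto
    then have "continuous_on {0..1} \<phi>"
      unfolding \<phi>_def
      by (intro continuous_on_add continuous_on_mult_right continuous_on_rabs continuous_on_diff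
          continuous_on_id continuous_on_const)
    then obtain \<delta> where \<delta>: "\<delta> > 0" "\<And>y. y \<in> {0..1} \<Longrightarrow> dist y x < \<delta> \<Longrightarrow> dist (\<phi> y) (\<phi> x) < e"
      using x e unfolding continuous_on_iff by (metis atLeastAtMost_iff)
    show "\<exists>U. openin (subtopology euclideanreal {0..1}) U \<and> x \<in> U \<and>
        (\<forall>y\<in>U. shrink_path \<beta> y \<in> M.mball (shrink_path \<beta> x) e)"
    proof (intro exI conjI ballI)
      show "openin (subtopology euclideanreal {0..1}) ({0..1} \<inter> ball x \<delta>)"
        by (rule openin_open_Int) simp
      show "x \<in> {0..1} \<inter> ball x \<delta>" using x \<delta>(1) by simp
      fix y assume y: "y \<in> {0..1} \<inter> ball x \<delta>"
      then have "\<phi> y < e" using \<delta>(2)[of y]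
        by (simp add: \<phi>_def dist_real_def abs_minus_commute abs_less_iff)
      moreover have "d_alpha \<alpha> (shrink_path \<beta> x) (shrink_path \<beta> y) \<le> \<phi> y"
        using d_alpha_shrink_path_le[OF IPalpha_IP_of[OF \<beta>] IPalpha_has_diversity[OF \<beta>] \<alpha> x, of y] y
        by (simp add: \<phi>_def abs_minus_commute)
      ultimately show "shrink_path \<beta> y \<in> M.mball (shrink_path \<beta> x) e"
        using shrink_path_in_IPalpha[OF \<beta>] x y by simp
    qed
  qed
qed

lemma IPalpha_path_connected:
  assumes "0 < \<alpha>" "\<alpha> < 1"
  shows "path_connected_space (Metric_space.mtopology (IPalpha \<alpha>) (d_alpha \<alpha>))"
proof -
  interpret M: Metric_space "IPalpha \<alpha>" "d_alpha \<alpha>" by (rule IPalpha_metric)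
  have "path_component_of M.mtopology {} \<beta>" if "\<beta> \<in> IPalpha \<alpha>" for \<beta>
    unfolding path_component_of_def using pathin_shrink_path[OF assms that]
    by (intro exI[of _ "shrink_path \<beta>"]) (simp add: shrink_path_def scale_IP_def scale_block_def)
  then show ?thesis
    unfolding path_connected_space_iff_path_component M.topspace_mtopology
    by (meson path_component_of_sym path_component_of_trans)
qed

section \<open>Concatenation and gadgets\<close>

definition shift_block :: "real \<Rightarrow> real \<times> real \<Rightarrow> real \<times> real" where
  "shift_block a U = (fst U + a, snd U + a)"

definition concat_IP :: "(real \<times> real) set \<Rightarrow> (real \<times> real) set \<Rightarrow> (real \<times> real) set" where
  "concat_IP \<beta> \<gamma> = \<beta> \<union> shift_block (IPlen \<beta>) ` \<gamma>"

lemma block_ivl_shift_block: "x \<in> block_ivl (shift_block a U) \<longleftrightarrow> x - a \<in> block_ivl U"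
  by (auto simp: block_ivl_def shift_block_def)

lemma blen_shift_block: "blen (shift_block a U) = blen U"
  by (simp add: blen_def shift_block_def)

lemma shift_block_inj: "inj_on (shift_block a) A"
  by (auto simp: inj_on_def shift_block_def prod_eq_iff)

lemma concat_IP_cases:
  assumes "IP_of \<beta> L1" "W \<in> concat_IP \<beta> \<gamma>"
  obtains "W \<in> \<beta>" | V where "V \<in> \<gamma>" "W = shift_block L1 V"
  using assms unfolding concat_IP_def IPlen_eqI[OF assms(1)] by blast

lemma mem_concat_IP_left: "U \<in> \<beta> \<Longrightarrow> U \<in> concat_IP \<beta> \<gamma>"
  by (simp add: concat_IP_def)

lemma mem_concat_IP_right: "IP_of \<beta> L1 \<Longrightarrow> V \<in> \<gamma> \<Longrightarrow> shift_block L1 V \<in> concat_IP \<beta> \<gamma>"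
  by (simp add: concat_IP_def IPlen_eqI)

lemma concat_IP_gaps_subset:
  assumes \<beta>: "IP_of \<beta> L1"
  shows "{0..L1 + L2} - (\<Union>W\<in>concat_IP \<beta> \<gamma>. block_ivl W)
    \<subseteq> ({0..L1} - (\<Union>U\<in>\<beta>. block_ivl U)) \<union> {x. x - L1 \<in> {0..L2} - (\<Union>V\<in>\<gamma>. block_ivl V)} \<union> {L1}"
proof
  fix x assume "x \<in> {0..L1 + L2} - (\<Union>W\<in>concat_IP \<beta> \<gamma>. block_ivl W)"
  then have x0: "0 \<le> x" "x \<le> L1 + L2" and xn: "\<And>W. W \<in> concat_IP \<beta> \<gamma> \<Longrightarrow> x \<notin> block_ivl W"
    by auto
  consider "x < L1" | "x = L1" | "L1 < x" by linarith
  then show "x \<in> ({0..L1} - (\<Union>U\<in>\<beta>. block_ivl U)) \<union> {x. x - L1 \<in> {0..L2} - (\<Union>V\<in>\<gamma>. block_ivl V)} \<union> {L1}"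
  proof cases
    case 1
    have "x \<notin> block_ivl U" if "U \<in> \<beta>" for U using xn[OF mem_concat_IP_left[OF that]] .
    then show ?thesis using 1 x0 by auto
  next
    case 3
    have "x - L1 \<notin> block_ivl V" if "V \<in> \<gamma>" for V
      using xn[OF mem_concat_IP_right[OF \<beta> that]] block_ivl_shift_block by blast
    then show ?thesis using 3 x0 by auto
  qed simp
qed

lemma IP_of_concat:
  assumes \<beta>: "IP_of \<beta> L1" and \<gamma>: "IP_of \<gamma> L2"
  shows "IP_of (concat_IP \<beta> \<gamma>) (L1 + L2)"
proof (rule IP_ofI)
  have L1: "0 \<le> L1" and L2: "0 \<le> L2" using IP_ofD(1)[OF \<beta>] IP_ofD(1)[OF \<gamma>] .
  then show "0 \<le> L1 + L2" by simp
  show "0 \<le> fst W \<and> fst W < snd W \<and> snd W \<le> L1 + L2" if "W \<in> concat_IP \<beta> \<gamma>" for W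
    using \<beta> that
  proof (cases rule: concat_IP_cases)
    case 1 then show ?thesis using IP_ofD(2)[OF \<beta> 1] L2 by auto
  next
    case (2 V) then show ?thesis using IP_ofD(2)[OF \<gamma> 2(1)] L1 by (auto simp: shift_block_def)
  qed
  have left: "x < L1" if "x \<in> block_ivl U" "U \<in> \<beta>" for x U
    using that IP_ofD(2)[OF \<beta> that(2)] by (auto simp: block_ivl_def)
  have right: "L1 < x" if "x \<in> block_ivl (shift_block L1 V)" "V \<in> \<gamma>" for x V
    using that IP_ofD(2)[OF \<gamma> that(2)] by (auto simp: block_ivl_def shift_block_def)
  show "block_ivl W \<inter> block_ivl W' = {}"
    if W: "W \<in> concat_IP \<beta> \<gamma>" "W' \<in> concat_IP \<beta> \<gamma>" "W \<noteq> W'" for W W'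
  proof (rule ccontr)
    assume "block_ivl W \<inter> block_ivl W' \<noteq> {}"
    then obtain x where x: "x \<in> block_ivl W" "x \<in> block_ivl W'" by blast
    consider "W \<in> \<beta>" "W' \<in> \<beta>" | V where "W \<in> \<beta>" "V \<in> \<gamma>" "W' = shift_block L1 V"
      | V where "W' \<in> \<beta>" "V \<in> \<gamma>" "W = shift_block L1 V"
      | V V' where "V \<in> \<gamma>" "W = shift_block L1 V" "V' \<in> \<gamma>" "W' = shift_block L1 V'"
      using concat_IP_cases[OF \<beta> W(1)] concat_IP_cases[OF \<beta> W(2)] by metis
    then show False
    proof cases
      case 1 then show ?thesis using IP_ofD(3)[OF \<beta> 1 W(3)] x by blast
    next
      case (2 V) then show ?thesis using left[OF x(1) 2(1)] right[of x V] x(2) by auto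
    next
      case (3 V) then show ?thesis using left[OF x(2) 3(1)] right[of x V] x(1) by auto
    next
      case (4 V V')
      then have "V \<noteq> V'" using W(3) by auto
      moreover have "x - L1 \<in> block_ivl V" "x - L1 \<in> block_ivl V'"
        using x 4 block_ivl_shift_block by auto
      ultimately show ?thesis using IP_ofD(3)[OF \<gamma> 4(1) 4(3)] by blast
    qed
  qed
  have "({0..L1} - (\<Union>U\<in>\<beta>. block_ivl U)) \<union> {x. x - L1 \<in> {0..L2} - (\<Union>V\<in>\<gamma>. block_ivl V)} \<union> {L1}
      \<in> null_sets lborel"
    using IP_ofD(4)[OF \<beta>] null_sets_translation[OF IP_ofD(4)[OF \<gamma>], of L1]
    by (intro null_sets.Un) (auto intro: finite_imp_null_set_lborel)
  then show "{0..L1 + L2} - (\<Union>W\<in>concat_IP \<beta> \<gamma>. block_ivl W) \<in> null_sets lborel"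
    by (rule null_sets_subset[OF _ _ concat_IP_gaps_subset[OF \<beta>]]) simp
qed

lemma IPlen_concat: "IP_of \<beta> L1 \<Longrightarrow> IP_of \<gamma> L2 \<Longrightarrow> IPlen (concat_IP \<beta> \<gamma>) = L1 + L2"
  using IP_of_concat IPlen_eqI by blast

lemma div_count_concat_left:
  assumes \<beta>: "IP_of \<beta> L1" and \<gamma>: "IP_of \<gamma> L2" and t: "t \<le> L1"
  shows "div_count (concat_IP \<beta> \<gamma>) t h = div_count \<beta> t h"
proof -
  have "{(a,b)\<in>concat_IP \<beta> \<gamma>. b - a > h \<and> b \<le> t} = {(a,b)\<in>\<beta>. b - a > h \<and> b \<le> t}"
  proof (intro equalityI subsetI)
    fix W assume W: "W \<in> {(a,b)\<in>concat_IP \<beta> \<gamma>. b - a > h \<and> b \<le> t}"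
    then have "W \<in> concat_IP \<beta> \<gamma>" by auto
    with \<beta> show "W \<in> {(a,b)\<in>\<beta>. b - a > h \<and> b \<le> t}"
    proof (cases rule: concat_IP_cases)
      case (2 V)
      then have "L1 < snd W" using IP_ofD(2)[OF \<gamma> 2(1)] by (auto simp: shift_block_def)
      then show ?thesis using W t by (auto simp: case_prod_beta)
    qed (use W in auto)
  qed (auto simp: concat_IP_def)
  then show ?thesis unfolding div_count_def by simp
qed

lemma div_count_concat_right:
  assumes \<beta>: "IP_of \<beta> L1" and \<gamma>: "IP_of \<gamma> L2" and t: "L1 \<le> t" and h: "0 < h"
  shows "div_count (concat_IP \<beta> \<gamma>) t h = div_count \<beta> L1 h + div_count \<gamma> (t - L1) h"
proof -
  define A where "A = {(a,b)\<in>\<beta>. b - a > h \<and> b \<le> L1}"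
  define B where "B = {(a,b)\<in>\<gamma>. b - a > h \<and> b \<le> t - L1}"
  have e: "{(a,b)\<in>concat_IP \<beta> \<gamma>. b - a > h \<and> b \<le> t} = A \<union> shift_block L1 ` B"
  proof (intro equalityI subsetI)
    fix W assume W: "W \<in> {(a,b)\<in>concat_IP \<beta> \<gamma>. b - a > h \<and> b \<le> t}"
    then have "W \<in> concat_IP \<beta> \<gamma>" by auto
    with \<beta> show "W \<in> A \<union> shift_block L1 ` B"
    proof (cases rule: concat_IP_cases)
      case 1 then show ?thesis using W IP_ofD(2)[OF \<beta> 1] unfolding A_def by auto
    next
      case (2 V)
      then have "V \<in> B" using W unfolding B_def by (auto simp: shift_block_def case_prod_beta)
      then show ?thesis using 2(2) by blast
    qed
  next
    fix W assume "W \<in> A \<union> shift_block L1 ` B"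
    then show "W \<in> {(a,b)\<in>concat_IP \<beta> \<gamma>. b - a > h \<and> b \<le> t}"
      unfolding A_def B_def concat_IP_def IPlen_eqI[OF \<beta>] using t
      by (auto simp: shift_block_def case_prod_beta)
  qed
  have finA: "finite A" unfolding A_def by (rule finite_div_count_set[OF \<beta> h])
  have finB: "finite B" unfolding B_def by (rule finite_div_count_set[OF \<gamma> h])
  have "A \<inter> shift_block L1 ` B = {}"
  proof (rule ccontr)
    assume "A \<inter> shift_block L1 ` B \<noteq> {}"
    then obtain V where V: "V \<in> B" "shift_block L1 V \<in> A" by blast
    then have "shift_block L1 V \<in> \<beta>" "V \<in> \<gamma>" unfolding A_def B_def by auto
    then show False
      using IP_ofD(2)[OF \<beta>, of "shift_block L1 V"] IP_ofD(2)[OF \<gamma>, of V] by (auto simp: shift_block_def)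
  qed
  then have "card (A \<union> shift_block L1 ` B) = card A + card B"
    using finA finB by (simp add: card_Un_disjoint card_image[OF shift_block_inj])
  then show ?thesis unfolding div_count_def e A_def B_def by simp
qed

lemma tendsto_div_count_concat_right:
  assumes \<beta>: "IP_of \<beta> L1" and \<gamma>: "IP_of \<gamma> L2" and t: "L1 \<le> t"
    and l1: "((\<lambda>h. h powr \<alpha> * div_count \<beta> L1 h) \<longlongrightarrow> l1) (at_right 0)"
    and l2: "((\<lambda>h. h powr \<alpha> * div_count \<gamma> (t - L1) h) \<longlongrightarrow> l2) (at_right 0)"
  shows "((\<lambda>h. h powr \<alpha> * div_count (concat_IP \<beta> \<gamma>) t h) \<longlongrightarrow> l1 + l2) (at_right 0)"
proof (rule Lim_transform_eventually[OF tendsto_add[OF l1 l2]])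
  show "eventually (\<lambda>h. h powr \<alpha> * div_count \<beta> L1 h + h powr \<alpha> * div_count \<gamma> (t - L1) h
      = h powr \<alpha> * div_count (concat_IP \<beta> \<gamma>) t h) (at_right 0)"
    using eventually_at_right_less[of "0::real"]
    by eventually_elim (simp add: div_count_concat_right[OF \<beta> \<gamma> t] algebra_simps)
qed

lemma has_diversity_concat:
  assumes \<beta>: "IP_of \<beta> L1" and \<gamma>: "IP_of \<gamma> L2"
    and div\<beta>: "has_diversity \<alpha> \<beta>" and div\<gamma>: "has_diversity \<alpha> \<gamma>"
  shows "has_diversity \<alpha> (concat_IP \<beta> \<gamma>)"
  unfolding has_diversity_def
proof
  fix t assume "t \<in> {0..IPlen (concat_IP \<beta> \<gamma>)}"
  then have t: "0 \<le> t" "t \<le> L1 + L2" using IPlen_concat[OF \<beta> \<gamma>] by auto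
  show "\<exists>l. ((\<lambda>h. h powr \<alpha> * div_count (concat_IP \<beta> \<gamma>) t h) \<longlongrightarrow> l) (at_right 0)"
  proof (cases "t \<le> L1")
    case True
    then have "t \<in> {0..IPlen \<beta>}" using t IPlen_eqI[OF \<beta>] by simp
    then show ?thesis
      using has_diversity_tendsto[OF div\<beta>] unfolding div_count_concat_left[OF \<beta> \<gamma> True] by blast
  next
    case False
    have "L1 \<in> {0..IPlen \<beta>}" "t - L1 \<in> {0..IPlen \<gamma>}"
      using IPlen_eqI[OF \<beta>] IPlen_eqI[OF \<gamma>] IP_ofD(1)[OF \<beta>] t False by auto
    then show ?thesis
      using tendsto_div_count_concat_right[OF \<beta> \<gamma> _ has_diversity_tendsto[OF div\<beta>]
          has_diversity_tendsto[OF div\<gamma>]] False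
      by (meson less_imp_le not_le)
  qed
qed

lemma IPalpha_concat: "\<beta> \<in> IPalpha \<alpha> \<Longrightarrow> \<gamma> \<in> IPalpha \<alpha> \<Longrightarrow> concat_IP \<beta> \<gamma> \<in> IPalpha \<alpha>"
  using IP_of_concat has_diversity_concat IPalpha_IP_of IPalpha_has_diversity IPalphaI by metis

lemma diversity_concat_left:
  assumes "IP_of \<beta> L1" "IP_of \<gamma> L2" "t \<le> L1"
  shows "diversity \<alpha> (concat_IP \<beta> \<gamma>) t = diversity \<alpha> \<beta> t"
  unfolding diversity_def div_count_concat_left[OF assms] ..

lemma diversity_concat_right:
  assumes \<beta>: "IP_of \<beta> L1" and \<gamma>: "IP_of \<gamma> L2"
    and div\<beta>: "has_diversity \<alpha> \<beta>" and div\<gamma>: "has_diversity \<alpha> \<gamma>"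
    and t: "L1 \<le> t" "t \<le> L1 + L2"
  shows "diversity \<alpha> (concat_IP \<beta> \<gamma>) t = diversity \<alpha> \<beta> L1 + diversity \<alpha> \<gamma> (t - L1)"
proof -
  have "L1 \<in> {0..IPlen \<beta>}" "t - L1 \<in> {0..IPlen \<gamma>}"
    using IPlen_eqI[OF \<beta>] IPlen_eqI[OF \<gamma>] IP_ofD(1)[OF \<beta>] t by auto
  note lim = tendsto_div_count_concat_right[OF \<beta> \<gamma> t(1) has_diversity_tendsto[OF div\<beta> this(1)]
      has_diversity_tendsto[OF div\<gamma> this(2)]]
  show ?thesis unfolding diversity_eqI[OF lim] by (simp add: diversity_def algebra_simps)
qed

lemma div_inf_concat:
  assumes \<beta>: "IP_of \<beta> L1" and \<gamma>: "IP_of \<gamma> L2"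
    and div\<beta>: "has_diversity \<alpha> \<beta>" and div\<gamma>: "has_diversity \<alpha> \<gamma>"
  shows "div_inf \<alpha> (concat_IP \<beta> \<gamma>) = div_inf \<alpha> \<beta> + div_inf \<alpha> \<gamma>"
  unfolding div_inf_def IPlen_concat[OF \<beta> \<gamma>] IPlen_eqI[OF \<beta>] IPlen_eqI[OF \<gamma>]
  using diversity_concat_right[OF \<beta> \<gamma> div\<beta> div\<gamma>, of "L1 + L2"] IP_ofD(1)[OF \<gamma>] by simp

lemma div_block_concat_left:
  assumes \<beta>: "IP_of \<beta> L1" and \<gamma>: "IP_of \<gamma> L2" and U: "U \<in> \<beta>"
  shows "div_block \<alpha> (concat_IP \<beta> \<gamma>) U = div_block \<alpha> \<beta> U"
  unfolding div_block_def using IP_ofD(2)[OF \<beta> U]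
  by (intro diversity_concat_left[OF \<beta> \<gamma>]) auto

lemma div_block_concat_right:
  assumes \<beta>: "IP_of \<beta> L1" and \<gamma>: "IP_of \<gamma> L2"
    and div\<beta>: "has_diversity \<alpha> \<beta>" and div\<gamma>: "has_diversity \<alpha> \<gamma>" and V: "V \<in> \<gamma>"
  shows "div_block \<alpha> (concat_IP \<beta> \<gamma>) (shift_block L1 V) = div_inf \<alpha> \<beta> + div_block \<alpha> \<gamma> V"
proof -
  have m: "(fst (shift_block L1 V) + snd (shift_block L1 V)) / 2 = (fst V + snd V) / 2 + L1"
    by (simp add: shift_block_def field_simps)
  show ?thesis
    unfolding div_block_def m div_inf_def IPlen_eqI[OF \<beta>]
    using diversity_concat_right[OF \<beta> \<gamma> div\<beta> div\<gamma>, of "(fst V + snd V) / 2 + L1"] IP_ofD(2)[OF \<gamma> V]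
    by simp
qed

lemma tendsto_powr_at_right_0: "0 < \<alpha> \<Longrightarrow> ((\<lambda>h. h powr \<alpha>) \<longlongrightarrow> 0) (at_right (0::real))"
  by (rule tendsto_zero_powrI)
    (auto intro: tendsto_ident_at eventually_mono[OF eventually_at_right_less[of "0::real"]])

lemma tendsto_powr_mult_bounded_zero:
  fixes f :: "real \<Rightarrow> real"
  assumes "0 < \<alpha>" "\<And>h. 0 < h \<Longrightarrow> 0 \<le> f h \<and> f h \<le> B"
  shows "((\<lambda>h. h powr \<alpha> * f h) \<longlongrightarrow> 0) (at_right 0)"
proof (rule tendsto_sandwich[of "\<lambda>_. 0" _ _ "\<lambda>h. h powr \<alpha> * B"])
  show "eventually (\<lambda>h. 0 \<le> h powr \<alpha> * f h) (at_right 0)"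
    using eventually_at_right_less[of "0::real"] by eventually_elim (use assms(2) in auto)
  show "eventually (\<lambda>h. h powr \<alpha> * f h \<le> h powr \<alpha> * B) (at_right 0)"
    using eventually_at_right_less[of "0::real"]
    by eventually_elim (use assms(2) in \<open>simp add: mult_left_mono\<close>)
  show "((\<lambda>h. h powr \<alpha> * B) \<longlongrightarrow> 0) (at_right 0)"
    using tendsto_mult_left_zero[OF tendsto_powr_at_right_0[OF assms(1)]] .
qed simp

lemma IP_of_single: "0 < r \<Longrightarrow> IP_of {(0, r)} r"
proof (rule IP_ofI)
  assume "0 < r"
  have "{0..r} - (\<Union>U\<in>{(0, r)}. block_ivl U) \<subseteq> {0, r}" by (auto simp: block_ivl_def)
  then show "{0..r} - (\<Union>U\<in>{(0, r)}. block_ivl U) \<in> null_sets lborel"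
    by (rule null_sets_subset[rotated 2]) (auto intro: finite_imp_null_set_lborel)
qed auto

lemma tendsto_div_count_single: "0 < \<alpha> \<Longrightarrow> ((\<lambda>h. h powr \<alpha> * div_count {(0, r)} t h) \<longlongrightarrow> 0) (at_right 0)"
proof (rule tendsto_powr_mult_bounded_zero[where B = 1])
  have "card {(a,b)\<in>{(0::real, r)}. b - a > h \<and> b \<le> t} \<le> card {(0::real, r)}"
    for h by (rule card_mono) auto
  then show "0 \<le> div_count {(0, r)} t h \<and> div_count {(0, r)} t h \<le> 1" for h
    unfolding div_count_def by simp
qed

lemma IPalpha_single:
  assumes "0 < \<alpha>" "0 < r"
  shows "{(0, r)} \<in> IPalpha \<alpha>"
  using tendsto_div_count_single[OF assms(1)]
  by (intro IPalphaI[OF IP_of_single[OF assms(2)]]) (auto simp: has_diversity_def)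

lemma diversity_single: "0 < \<alpha> \<Longrightarrow> diversity \<alpha> {(0, r)} t = 0"
  using diversity_eqI[OF tendsto_div_count_single] by simp

text \<open>The gadget has blocks of lengths \<open>(k + 1) powr (-1/\<alpha>)\<close>, accumulating at its right end:
  about \<open>h powr (-\<alpha>)\<close> of them are longer than \<open>h\<close>, so its diversity jumps from \<open>0\<close> to
  \<open>Gamma (1 - \<alpha>)\<close> at its total length.\<close>

definition gadget_len :: "real \<Rightarrow> nat \<Rightarrow> real" where
  "gadget_len \<alpha> k = real (Suc k) powr (- (1 / \<alpha>))"

definition gadget_pos :: "real \<Rightarrow> nat \<Rightarrow> real" where
  "gadget_pos \<alpha> k = (\<Sum>j<k. gadget_len \<alpha> j)"

definition gadget_total :: "real \<Rightarrow> real" where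
  "gadget_total \<alpha> = suminf (gadget_len \<alpha>)"

definition gadget :: "real \<Rightarrow> (real \<times> real) set" where
  "gadget \<alpha> = range (\<lambda>k. (gadget_pos \<alpha> k, gadget_pos \<alpha> (Suc k)))"

lemma gadget_len_pos: "0 < gadget_len \<alpha> k"
  by (simp add: gadget_len_def)

lemma gadget_pos_Suc: "gadget_pos \<alpha> (Suc k) = gadget_pos \<alpha> k + gadget_len \<alpha> k"
  by (simp add: gadget_pos_def)

lemma gadget_pos_0: "gadget_pos \<alpha> 0 = 0"
  by (simp add: gadget_pos_def)

lemma gadget_pos_mono: "k \<le> k' \<Longrightarrow> gadget_pos \<alpha> k \<le> gadget_pos \<alpha> k'"
  unfolding gadget_pos_def by (rule sum_mono2) (auto intro: less_imp_le[OF gadget_len_pos])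

lemma gadget_pos_strict_mono: "k < k' \<Longrightarrow> gadget_pos \<alpha> k < gadget_pos \<alpha> k'"
  using gadget_pos_mono[of "Suc k" k' \<alpha>] gadget_pos_Suc[of \<alpha> k] gadget_len_pos[of \<alpha> k] by simp

context
  fixes \<alpha> :: real
  assumes \<alpha>: "0 < \<alpha>" "\<alpha> < 1"
begin

lemma summable_gadget_len: "summable (gadget_len \<alpha>)"
proof -
  have "- (1 / \<alpha>) < -1" using \<alpha> by (simp add: field_simps)
  then have "summable (\<lambda>n. real n powr (- (1 / \<alpha>)))" by (simp add: summable_real_powr_iff)
  then show ?thesis unfolding gadget_len_def[abs_def] by (subst summable_Suc_iff)
qed

lemma gadget_pos_less_total: "gadget_pos \<alpha> k < gadget_total \<alpha>"
proof -
  have "gadget_pos \<alpha> (Suc k) \<le> gadget_total \<alpha>"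
    unfolding gadget_pos_def gadget_total_def
    by (rule sum_le_suminf[OF summable_gadget_len]) (auto intro: less_imp_le[OF gadget_len_pos])
  then show ?thesis using gadget_pos_strict_mono[of k "Suc k" \<alpha>] by simp
qed

lemma gadget_pos_tendsto: "gadget_pos \<alpha> \<longlonglongrightarrow> gadget_total \<alpha>"
  unfolding gadget_pos_def[abs_def] gadget_total_def using summable_LIMSEQ[OF summable_gadget_len] .

lemma gadget_total_pos: "0 < gadget_total \<alpha>"
  using gadget_pos_less_total[of 0] gadget_pos_0[of \<alpha>] by simp

lemma gadget_pos_bracket:
  assumes "0 \<le> x" "x < gadget_total \<alpha>"
  obtains k where "gadget_pos \<alpha> k \<le> x" "x < gadget_pos \<alpha> (Suc k)"
proof -
  have "eventually (\<lambda>j. x < gadget_pos \<alpha> j) sequentially"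
    by (rule order_tendstoD(1)[OF gadget_pos_tendsto assms(2)])
  then obtain N where N: "\<And>j. N \<le> j \<Longrightarrow> x < gadget_pos \<alpha> j"
    unfolding eventually_sequentially by blast
  define J where "J = {j. gadget_pos \<alpha> j \<le> x}"
  have "J \<subseteq> {..<N}" unfolding J_def using N by (force simp: not_le[symmetric])
  then have finJ: "finite J" by (rule finite_subset) simp
  have "0 \<in> J" using assms(1) gadget_pos_0 by (simp add: J_def)
  define k where "k = Max J"
  have "k \<in> J" unfolding k_def using finJ \<open>0 \<in> J\<close> by (intro Max_in) auto
  moreover have "Suc k \<notin> J" using Max_ge[OF finJ, of "Suc k"] unfolding k_def by auto
  ultimately show ?thesis using that[of k] by (simp add: J_def)
qed

lemma IP_of_gadget: "IP_of (gadget \<alpha>) (gadget_total \<alpha>)"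
proof (rule IP_ofI)
  show "0 \<le> gadget_total \<alpha>" using gadget_total_pos by simp
  show "0 \<le> fst U \<and> fst U < snd U \<and> snd U \<le> gadget_total \<alpha>" if U: "U \<in> gadget \<alpha>" for U
  proof -
    obtain k where "U = (gadget_pos \<alpha> k, gadget_pos \<alpha> (Suc k))" using U unfolding gadget_def by blast
    then show ?thesis
      using gadget_pos_mono[of 0 k \<alpha>] gadget_pos_0[of \<alpha>] gadget_pos_strict_mono[of k "Suc k" \<alpha>]
        gadget_pos_less_total[of "Suc k"]
      by simp
  qed
  show "block_ivl U \<inter> block_ivl V = {}" if UV: "U \<in> gadget \<alpha>" "V \<in> gadget \<alpha>" "U \<noteq> V" for U V
  proof -
    obtain k k' where kk: "U = (gadget_pos \<alpha> k, gadget_pos \<alpha> (Suc k))" "V = (gadget_pos \<alpha> k', gadget_pos \<alpha> (Suc k'))"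
      using UV(1,2) unfolding gadget_def by blast
    then have "k \<noteq> k'" using UV(3) by auto
    then have "Suc k \<le> k' \<or> Suc k' \<le> k" by linarith
    then show ?thesis
    proof
      assume "Suc k \<le> k'"
      then have "gadget_pos \<alpha> (Suc k) \<le> gadget_pos \<alpha> k'" by (rule gadget_pos_mono)
      then show ?thesis using kk by (auto simp: block_ivl_def)
    next
      assume "Suc k' \<le> k"
      then have "gadget_pos \<alpha> (Suc k') \<le> gadget_pos \<alpha> k" by (rule gadget_pos_mono)
      then show ?thesis using kk by (auto simp: block_ivl_def)
    qed
  qed
  have "{0..gadget_total \<alpha>} - (\<Union>U\<in>gadget \<alpha>. block_ivl U) \<subseteq> range (gadget_pos \<alpha>) \<union> {gadget_total \<alpha>}"
  proof
    fix x assume x: "x \<in> {0..gadget_total \<alpha>} - (\<Union>U\<in>gadget \<alpha>. block_ivl U)"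
    show "x \<in> range (gadget_pos \<alpha>) \<union> {gadget_total \<alpha>}"
    proof (rule ccontr)
      assume "x \<notin> range (gadget_pos \<alpha>) \<union> {gadget_total \<alpha>}"
      then have "x < gadget_total \<alpha>" and nr: "\<And>j. gadget_pos \<alpha> j \<noteq> x" using x by auto
      then obtain k where "gadget_pos \<alpha> k \<le> x" "x < gadget_pos \<alpha> (Suc k)"
        using gadget_pos_bracket x by auto
      then have "x \<in> block_ivl (gadget_pos \<alpha> k, gadget_pos \<alpha> (Suc k))"
        using nr[of k] by (simp add: block_ivl_def less_le)
      moreover have "(gadget_pos \<alpha> k, gadget_pos \<alpha> (Suc k)) \<in> gadget \<alpha>" unfolding gadget_def by blast
      ultimately show False using x by blast
    qed
  qed
  moreover have "range (gadget_pos \<alpha>) \<union> {gadget_total \<alpha>} \<in> null_sets lborel"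
    by (intro countable_imp_null_set_lborel) simp
  moreover have "{0..gadget_total \<alpha>} - (\<Union>U\<in>gadget \<alpha>. block_ivl U) \<in> sets lborel"
    by simp
  ultimately show "{0..gadget_total \<alpha>} - (\<Union>U\<in>gadget \<alpha>. block_ivl U) \<in> null_sets lborel"
    by (rule null_sets_subset[rotated 2])
qed

end

lemma card_Suc_less: "card {k::nat. real (Suc k) < y} = nat \<lceil>y - 1\<rceil>"
proof -
  have "{k::nat. real (Suc k) < y} = {..<nat \<lceil>y - 1\<rceil>}"
    using less_ceiling_iff[of "int _" "y - 1"] by (auto simp: zless_nat_eq_int_zless)
  then show ?thesis by simp
qed

lemma nat_ceiling_minus_one_bounds:
  fixes y :: real
  shows "y - 1 \<le> real (nat \<lceil>y - 1\<rceil>)" "0 \<le> y \<Longrightarrow> real (nat \<lceil>y - 1\<rceil>) \<le> y"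
proof -
  show "y - 1 \<le> real (nat \<lceil>y - 1\<rceil>)" using le_of_int_ceiling[of "y - 1"] by linarith
  assume "0 \<le> y"
  moreover have "\<lceil>y - 1\<rceil> - 1 < \<lceil>y - 1\<rceil>" by simp
  then have "real_of_int (\<lceil>y - 1\<rceil> - 1) < y - 1" by (simp only: less_ceiling_iff)
  ultimately show "real (nat \<lceil>y - 1\<rceil>) \<le> y" by (cases "\<lceil>y - 1\<rceil> \<le> 0") auto
qed

context
  fixes \<alpha> :: real
  assumes \<alpha>: "0 < \<alpha>" "\<alpha> < 1"
begin

lemma gadget_len_gt_iff:
  assumes "0 < h"
  shows "h < gadget_len \<alpha> k \<longleftrightarrow> real (Suc k) < h powr (- \<alpha>)"
proof -
  define X where "X = gadget_len \<alpha> k"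
  have X: "0 < X" unfolding X_def by (rule gadget_len_pos)
  have inv: "X powr (- \<alpha>) = real (Suc k)"
    unfolding X_def gadget_len_def using \<alpha> by (simp add: powr_powr)
  have "h < X \<longleftrightarrow> X powr (- \<alpha>) < h powr (- \<alpha>)"
  proof
    assume "h < X"
    then show "X powr (- \<alpha>) < h powr (- \<alpha>)" using assms \<alpha> by (intro powr_less_mono2_neg) auto
  next
    assume r: "X powr (- \<alpha>) < h powr (- \<alpha>)"
    show "h < X"
    proof (rule ccontr)
      assume "\<not> h < X"
      then have "h powr (- \<alpha>) \<le> X powr (- \<alpha>)" using X \<alpha> by (intro powr_mono2') auto
      then show False using r by simp
    qed
  qed
  then show ?thesis using inv by (simp add: X_def)
qed

lemma div_count_gadget_total:
  assumes h: "0 < h" and t: "gadget_total \<alpha> \<le> t"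
  shows "div_count (gadget \<alpha>) t h = real (nat \<lceil>h powr (- \<alpha>) - 1\<rceil>)"
proof -
  let ?f = "\<lambda>k. (gadget_pos \<alpha> k, gadget_pos \<alpha> (Suc k))"
  have inj: "inj_on ?f A" for A
  proof (rule inj_onI)
    fix k k' assume "?f k = ?f k'"
    then have "gadget_pos \<alpha> k = gadget_pos \<alpha> k'" by simp
    then show "k = k'"
      using gadget_pos_strict_mono[of k k'] gadget_pos_strict_mono[of k' k]
      by (metis less_irrefl nat_neq_iff)
  qed
  have "{(a,b)\<in>gadget \<alpha>. b - a > h \<and> b \<le> t} = ?f ` {k. h < gadget_len \<alpha> k}"
  proof (intro equalityI subsetI)
    fix W assume "W \<in> {(a,b)\<in>gadget \<alpha>. b - a > h \<and> b \<le> t}"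
    then obtain k where "W = ?f k" "gadget_pos \<alpha> (Suc k) - gadget_pos \<alpha> k > h"
      unfolding gadget_def by auto
    then show "W \<in> ?f ` {k. h < gadget_len \<alpha> k}" using gadget_pos_Suc[of \<alpha> k] by auto
  next
    fix W assume "W \<in> ?f ` {k. h < gadget_len \<alpha> k}"
    then obtain k where "W = ?f k" "h < gadget_len \<alpha> k" by blast
    moreover have "gadget_pos \<alpha> (Suc k) \<le> t" using gadget_pos_less_total[OF \<alpha>, of "Suc k"] t by simp
    ultimately show "W \<in> {(a,b)\<in>gadget \<alpha>. b - a > h \<and> b \<le> t}"
      unfolding gadget_def using gadget_pos_Suc[of \<alpha> k] by auto
  qed
  then have "div_count (gadget \<alpha>) t h = real (card {k. h < gadget_len \<alpha> k})"
    unfolding div_count_def by (simp add: card_image[OF inj])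
  also have "{k. h < gadget_len \<alpha> k} = {k. real (Suc k) < h powr (- \<alpha>)}"
    using gadget_len_gt_iff[OF h] by auto
  finally show ?thesis by (simp only: card_Suc_less)
qed

lemma tendsto_div_count_gadget_total:
  assumes "gadget_total \<alpha> \<le> t"
  shows "((\<lambda>h. h powr \<alpha> * div_count (gadget \<alpha>) t h) \<longlongrightarrow> 1) (at_right 0)"
proof (rule tendsto_sandwich[of "\<lambda>h. 1 - h powr \<alpha>" _ _ "\<lambda>_. 1"])
  have inv: "h powr \<alpha> * h powr (- \<alpha>) = 1" if "0 < h" for h :: real
    using that by (simp add: powr_add[symmetric])
  show "eventually (\<lambda>h. 1 - h powr \<alpha> \<le> h powr \<alpha> * div_count (gadget \<alpha>) t h) (at_right 0)"
    using eventually_at_right_less[of "0::real"]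
  proof eventually_elim
    case (elim h)
    have "h powr \<alpha> * (h powr (- \<alpha>) - 1) \<le> h powr \<alpha> * real (nat \<lceil>h powr (- \<alpha>) - 1\<rceil>)"
      by (intro mult_left_mono nat_ceiling_minus_one_bounds(1)) simp
    then show ?case
      unfolding div_count_gadget_total[OF elim assms] using inv[OF elim] by (simp add: right_diff_distrib)
  qed
  show "eventually (\<lambda>h. h powr \<alpha> * div_count (gadget \<alpha>) t h \<le> 1) (at_right 0)"
    using eventually_at_right_less[of "0::real"]
  proof eventually_elim
    case (elim h)
    have "h powr \<alpha> * real (nat \<lceil>h powr (- \<alpha>) - 1\<rceil>) \<le> h powr \<alpha> * h powr (- \<alpha>)"
      by (intro mult_left_mono nat_ceiling_minus_one_bounds(2)) simp_all
    then show ?case unfolding div_count_gadget_total[OF elim assms] using inv[OF elim] by simp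
  qed
  show "((\<lambda>h. 1 - h powr \<alpha>) \<longlongrightarrow> 1) (at_right 0)"
    using tendsto_diff[OF tendsto_const[of 1] tendsto_powr_at_right_0[OF \<alpha>(1)]] by simp
qed simp

lemma tendsto_div_count_gadget_less:
  assumes t: "t < gadget_total \<alpha>"
  shows "((\<lambda>h. h powr \<alpha> * div_count (gadget \<alpha>) t h) \<longlongrightarrow> 0) (at_right 0)"
proof -
  have "eventually (\<lambda>j. t < gadget_pos \<alpha> j) sequentially"
    by (rule order_tendstoD(1)[OF gadget_pos_tendsto[OF \<alpha>] t])
  then obtain N where N: "\<And>j. N \<le> j \<Longrightarrow> t < gadget_pos \<alpha> j"
    unfolding eventually_sequentially by blast
  have "{(a,b)\<in>gadget \<alpha>. b - a > h \<and> b \<le> t} \<subseteq> (\<lambda>k. (gadget_pos \<alpha> k, gadget_pos \<alpha> (Suc k))) ` {..<N}" for h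
  proof
    fix W assume "W \<in> {(a,b)\<in>gadget \<alpha>. b - a > h \<and> b \<le> t}"
    then obtain k where k: "W = (gadget_pos \<alpha> k, gadget_pos \<alpha> (Suc k))" "gadget_pos \<alpha> (Suc k) \<le> t"
      unfolding gadget_def by auto
    then have "Suc k < N" using N[of "Suc k"] by (meson not_le)
    then show "W \<in> (\<lambda>k. (gadget_pos \<alpha> k, gadget_pos \<alpha> (Suc k))) ` {..<N}" using k(1) by auto
  qed
  then have "card {(a,b)\<in>gadget \<alpha>. b - a > h \<and> b \<le> t}
      \<le> card ((\<lambda>k. (gadget_pos \<alpha> k, gadget_pos \<alpha> (Suc k))) ` {..<N})" for h
    by (intro card_mono) auto
  also have "\<dots> \<le> N" using card_image_le[of "{..<N}"] by simp
  finally have "card {(a,b)\<in>gadget \<alpha>. b - a > h \<and> b \<le> t} \<le> N" for h .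
  then show ?thesis
    by (intro tendsto_powr_mult_bounded_zero[OF \<alpha>(1), where B = "real N"]) (auto simp: div_count_def)
qed

lemma IPalpha_gadget: "gadget \<alpha> \<in> IPalpha \<alpha>"
proof (rule IPalphaI[OF IP_of_gadget[OF \<alpha>]])
  show "has_diversity \<alpha> (gadget \<alpha>)"
    unfolding has_diversity_def IPlen_eqI[OF IP_of_gadget[OF \<alpha>]]
  proof
    fix t assume "t \<in> {0..gadget_total \<alpha>}"
    then show "\<exists>l. ((\<lambda>h. h powr \<alpha> * div_count (gadget \<alpha>) t h) \<longlongrightarrow> l) (at_right 0)"
      using tendsto_div_count_gadget_less tendsto_div_count_gadget_total
      by (cases "t < gadget_total \<alpha>") auto
  qed
qed

lemma div_inf_gadget: "div_inf \<alpha> (gadget \<alpha>) = Gamma (1 - \<alpha>)"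
  unfolding div_inf_def IPlen_eqI[OF IP_of_gadget[OF \<alpha>]]
  using diversity_eqI[OF tendsto_div_count_gadget_total[OF order_refl]] by simp

end

section \<open>Separability\<close>

fun gadgets :: "real \<Rightarrow> real \<Rightarrow> nat \<Rightarrow> (real \<times> real) set" where
  "gadgets \<alpha> c 0 = {}"
| "gadgets \<alpha> c (Suc k) = concat_IP (scale_IP c (gadget \<alpha>)) (gadgets \<alpha> c k)"

lemma
  assumes \<alpha>: "0 < \<alpha>" "\<alpha> < 1" and c: "0 < c"
  shows IPalpha_gadgets: "gadgets \<alpha> c k \<in> IPalpha \<alpha>"
    and IPlen_gadgets: "IPlen (gadgets \<alpha> c k) = real k * (c * gadget_total \<alpha>)"
    and div_inf_gadgets: "div_inf \<alpha> (gadgets \<alpha> c k) = real k * (c powr \<alpha> * Gamma (1 - \<alpha>))"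
proof -
  have G: "IP_of (scale_IP c (gadget \<alpha>)) (c * gadget_total \<alpha>)" "scale_IP c (gadget \<alpha>) \<in> IPalpha \<alpha>"
    "div_inf \<alpha> (scale_IP c (gadget \<alpha>)) = c powr \<alpha> * Gamma (1 - \<alpha>)"
    using IP_of_scale[OF IP_of_gadget[OF \<alpha>] c] IPalpha_scale[OF IPalpha_gadget[OF \<alpha>] c]
      div_inf_scale[OF IP_of_gadget[OF \<alpha>] IPalpha_has_diversity[OF IPalpha_gadget[OF \<alpha>]] c]
      div_inf_gadget[OF \<alpha>]
    by simp_all
  have "gadgets \<alpha> c k \<in> IPalpha \<alpha> \<and> IPlen (gadgets \<alpha> c k) = real k * (c * gadget_total \<alpha>)
      \<and> div_inf \<alpha> (gadgets \<alpha> c k) = real k * (c powr \<alpha> * Gamma (1 - \<alpha>))"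
  proof (induction k)
    case 0
    then show ?case using IPalpha_empty IPlen_eqI[OF IP_of_empty] div_inf_empty by simp
  next
    case (Suc k)
    then have K: "IP_of (gadgets \<alpha> c k) (real k * (c * gadget_total \<alpha>))"
      using IPalpha_IP_of by metis
    show ?case
      using IPalpha_concat[OF G(2) conjunct1[OF Suc.IH]] IPlen_concat[OF G(1) K]
        div_inf_concat[OF G(1) K IPalpha_has_diversity[OF G(2)] IPalpha_has_diversity[OF conjunct1[OF Suc.IH]]]
        G(3) Suc.IH
      by (simp add: algebra_simps)
  qed
  then show "gadgets \<alpha> c k \<in> IPalpha \<alpha>" "IPlen (gadgets \<alpha> c k) = real k * (c * gadget_total \<alpha>)"
    "div_inf \<alpha> (gadgets \<alpha> c k) = real k * (c powr \<alpha> * Gamma (1 - \<alpha>))"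
    by auto
qed

text \<open>\<open>gadget_partition \<alpha> c [(k\<^sub>1, r\<^sub>1), \<dots>, (k\<^sub>n, r\<^sub>n)] k\<close> consists of \<open>k\<^sub>1\<close> gadgets scaled by
  \<open>c\<close>, a block of length \<open>r\<^sub>1\<close>, \<open>k\<^sub>2\<close> gadgets, \<dots>, a block of length \<open>r\<^sub>n\<close> and finally
  \<open>k\<close> gadgets; the gadgets carry diversity in quanta of \<open>c powr \<alpha> * Gamma (1 - \<alpha>)\<close> at
  total length \<open>c * gadget_total \<alpha>\<close> each.\<close>

fun gadget_partition :: "real \<Rightarrow> real \<Rightarrow> (nat \<times> real) list \<Rightarrow> nat \<Rightarrow> (real \<times> real) set" where
  "gadget_partition \<alpha> c [] k = gadgets \<alpha> c k"
| "gadget_partition \<alpha> c ((k', r) # ps) k =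
     concat_IP (gadgets \<alpha> c k') (concat_IP {(0, r)} (gadget_partition \<alpha> c ps k))"

lemma
  assumes \<alpha>: "0 < \<alpha>" "\<alpha> < 1" and c: "0 < c" and ps: "\<forall>p\<in>set ps. 0 < snd p"
  shows IPalpha_gadget_partition: "gadget_partition \<alpha> c ps k \<in> IPalpha \<alpha>"
    and IPlen_gadget_partition: "IPlen (gadget_partition \<alpha> c ps k)
      = (\<Sum>p\<leftarrow>ps. real (fst p) * (c * gadget_total \<alpha>) + snd p) + real k * (c * gadget_total \<alpha>)"
    and div_inf_gadget_partition: "div_inf \<alpha> (gadget_partition \<alpha> c ps k)
      = real (sum_list (map fst ps) + k) * (c powr \<alpha> * Gamma (1 - \<alpha>))"
proof -
  let ?m = "c * gadget_total \<alpha>" and ?q = "c powr \<alpha> * Gamma (1 - \<alpha>)"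
  have "gadget_partition \<alpha> c ps k \<in> IPalpha \<alpha>
    \<and> IPlen (gadget_partition \<alpha> c ps k) = (\<Sum>p\<leftarrow>ps. real (fst p) * ?m + snd p) + real k * ?m
    \<and> div_inf \<alpha> (gadget_partition \<alpha> c ps k) = real (sum_list (map fst ps) + k) * ?q"
    using ps
  proof (induction ps)
    case Nil
    then show ?case using IPalpha_gadgets[OF \<alpha> c] IPlen_gadgets[OF \<alpha> c] div_inf_gadgets[OF \<alpha> c] by simp
  next
    case (Cons p ps)
    obtain k' r where p: "p = (k', r)" by force
    have r: "0 < r" using Cons.prems p by simp
    let ?G = "gadgets \<alpha> c k'" and ?R = "gadget_partition \<alpha> c ps k"
    have "?R \<in> IPalpha \<alpha>" using Cons by simp
    then have R: "?R \<in> IPalpha \<alpha>" "IP_of ?R (IPlen ?R)" "has_diversity \<alpha> ?R"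
      using IPalpha_IP_of IPalpha_has_diversity by blast+
    have G: "?G \<in> IPalpha \<alpha>" "IP_of ?G (real k' * ?m)" "has_diversity \<alpha> ?G"
      using IPalpha_gadgets[OF \<alpha> c, of k'] IPlen_gadgets[OF \<alpha> c, of k'] div_inf_gadgets[OF \<alpha> c, of k']
        IPalpha_IP_of IPalpha_has_diversity
      by metis+
    have B: "{(0, r)} \<in> IPalpha \<alpha>" "IP_of {(0, r)} r" "has_diversity \<alpha> {(0, r)}"
      using IPalpha_single[OF \<alpha>(1) r] IP_of_single[OF r] IPalpha_has_diversity by auto
    have C: "IP_of (concat_IP {(0, r)} ?R) (r + IPlen ?R)"
      "has_diversity \<alpha> (concat_IP {(0, r)} ?R)" "concat_IP {(0, r)} ?R \<in> IPalpha \<alpha>"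
      using IP_of_concat[OF B(2) R(2)] has_diversity_concat[OF B(2) R(2) B(3) R(3)] IPalpha_concat[OF B(1) R(1)]
      by auto
    have "div_inf \<alpha> {(0, r)} = 0" using diversity_single[OF \<alpha>(1)] by (simp add: div_inf_def)
    then show ?case
      using Cons p IPalpha_concat[OF G(1) C(3)] IPlen_concat[OF G(2) C(1)]
        div_inf_concat[OF G(2) C(1) G(3) C(2)] div_inf_concat[OF B(2) R(2) B(3) R(3)]
        div_inf_gadgets[OF \<alpha> c, of k']
      by (simp add: algebra_simps)
  qed
  then show "gadget_partition \<alpha> c ps k \<in> IPalpha \<alpha>"
    "IPlen (gadget_partition \<alpha> c ps k) = (\<Sum>p\<leftarrow>ps. real (fst p) * ?m + snd p) + real k * ?m"
    "div_inf \<alpha> (gadget_partition \<alpha> c ps k) = real (sum_list (map fst ps) + k) * ?q"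
    by auto
qed

lemma gadget_partition_Cons_blocks:
  fixes k' :: nat
  assumes \<alpha>: "0 < \<alpha>" "\<alpha> < 1" and c: "0 < c" and r: "0 < r"
    and R: "gadget_partition \<alpha> c ps k \<in> IPalpha \<alpha>"
  defines "L \<equiv> real k' * (c * gadget_total \<alpha>)"
  shows "shift_block L (0, r) \<in> gadget_partition \<alpha> c ((k', r) # ps) k"
    and "div_block \<alpha> (gadget_partition \<alpha> c ((k', r) # ps) k) (shift_block L (0, r))
      = real k' * (c powr \<alpha> * Gamma (1 - \<alpha>))"
    and "V \<in> gadget_partition \<alpha> c ps k \<Longrightarrow>
      shift_block L (shift_block r V) \<in> gadget_partition \<alpha> c ((k', r) # ps) k"
    and "V \<in> gadget_partition \<alpha> c ps k \<Longrightarrow>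
      div_block \<alpha> (gadget_partition \<alpha> c ((k', r) # ps) k) (shift_block L (shift_block r V))
      = real k' * (c powr \<alpha> * Gamma (1 - \<alpha>)) + div_block \<alpha> (gadget_partition \<alpha> c ps k) V"
proof -
  let ?G = "gadgets \<alpha> c k'" and ?B = "{(0::real, r)}" and ?R = "gadget_partition \<alpha> c ps k"
  let ?C = "concat_IP ?B ?R"
  have R': "IP_of ?R (IPlen ?R)" "has_diversity \<alpha> ?R"
    using IPalpha_IP_of[OF R] IPalpha_has_diversity[OF R] by auto
  have G: "IP_of ?G L" "has_diversity \<alpha> ?G" "div_inf \<alpha> ?G = real k' * (c powr \<alpha> * Gamma (1 - \<alpha>))"
    using IPalpha_gadgets[OF \<alpha> c, of k'] IPlen_gadgets[OF \<alpha> c, of k'] div_inf_gadgets[OF \<alpha> c, of k']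
      IPalpha_IP_of IPalpha_has_diversity unfolding L_def
    by metis+
  have B: "IP_of ?B r" "has_diversity \<alpha> ?B" "div_inf \<alpha> ?B = 0" "div_block \<alpha> ?B (0, r) = 0"
    using IP_of_single[OF r] IPalpha_has_diversity[OF IPalpha_single[OF \<alpha>(1) r]]
      diversity_single[OF \<alpha>(1)] by (auto simp: div_inf_def div_block_def)
  have C: "IP_of ?C (r + IPlen ?R)" "has_diversity \<alpha> ?C"
    using IP_of_concat[OF B(1) R'(1)] has_diversity_concat[OF B(1) R'(1) B(2) R'(2)] by auto
  have \<gamma>: "gadget_partition \<alpha> c ((k', r) # ps) k = concat_IP ?G ?C" by simp
  note div_G_C = div_block_concat_right[OF G(1) C(1) G(2) C(2)]
  show "shift_block L (0, r) \<in> gadget_partition \<alpha> c ((k', r) # ps) k"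
    "div_block \<alpha> (gadget_partition \<alpha> c ((k', r) # ps) k) (shift_block L (0, r))
      = real k' * (c powr \<alpha> * Gamma (1 - \<alpha>))"
    unfolding \<gamma> using mem_concat_IP_right[OF G(1) mem_concat_IP_left[of "(0, r)" ?B ?R]]
      div_G_C[OF mem_concat_IP_left[of "(0, r)" ?B ?R]] div_block_concat_left[OF B(1) R'(1)] B(4) G(3)
    by simp_all
  assume "V \<in> ?R"
  then show "shift_block L (shift_block r V) \<in> gadget_partition \<alpha> c ((k', r) # ps) k"
    "div_block \<alpha> (gadget_partition \<alpha> c ((k', r) # ps) k) (shift_block L (shift_block r V))
      = real k' * (c powr \<alpha> * Gamma (1 - \<alpha>)) + div_block \<alpha> ?R V"
    unfolding \<gamma> using mem_concat_IP_right[OF G(1) mem_concat_IP_right[OF B(1)]]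
      div_G_C[OF mem_concat_IP_right[OF B(1)]] div_block_concat_right[OF B(1) R'(1) B(2) R'(2)] B(3) G(3)
    by simp_all
qed

lemma gadget_partition_marked_blocks:
  assumes \<alpha>: "0 < \<alpha>" "\<alpha> < 1" and c: "0 < c" and ps: "\<forall>p\<in>set ps. 0 < snd p"
  obtains Vs where "length Vs = length ps" "sorted_wrt (\<lambda>V V'. fst V < fst V') Vs"
    "\<And>i. i < length ps \<Longrightarrow> Vs ! i \<in> gadget_partition \<alpha> c ps k"
    "\<And>i. i < length ps \<Longrightarrow> blen (Vs ! i) = snd (ps ! i)"
    "\<And>i. i < length ps \<Longrightarrow> div_block \<alpha> (gadget_partition \<alpha> c ps k) (Vs ! i)
       = real (sum_list (take (Suc i) (map fst ps))) * (c powr \<alpha> * Gamma (1 - \<alpha>))"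
proof -
  let ?q = "c powr \<alpha> * Gamma (1 - \<alpha>)"
  have "\<exists>Vs. length Vs = length ps \<and> sorted_wrt (\<lambda>V V'. fst V < fst V') Vs \<and>
    (\<forall>i<length ps. Vs ! i \<in> gadget_partition \<alpha> c ps k \<and> blen (Vs ! i) = snd (ps ! i) \<and>
      div_block \<alpha> (gadget_partition \<alpha> c ps k) (Vs ! i) = real (sum_list (take (Suc i) (map fst ps))) * ?q)"
    using ps
  proof (induction ps)
    case (Cons p ps)
    obtain k' r where p: "p = (k', r)" by force
    have r: "0 < r" using Cons.prems p by simp
    let ?R = "gadget_partition \<alpha> c ps k" and ?L = "real k' * (c * gadget_total \<alpha>)"
    obtain Vs where Vs: "length Vs = length ps" "sorted_wrt (\<lambda>V V'. fst V < fst V') Vs"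
      "\<And>i. i < length ps \<Longrightarrow> Vs ! i \<in> ?R \<and> blen (Vs ! i) = snd (ps ! i) \<and>
        div_block \<alpha> ?R (Vs ! i) = real (sum_list (take (Suc i) (map fst ps))) * ?q"
      using Cons by auto
    have R: "?R \<in> IPalpha \<alpha>" using Cons.prems IPalpha_gadget_partition[OF \<alpha> c] by simp
    note blocks = gadget_partition_Cons_blocks[where k' = k', OF \<alpha> c r R]
    define f where "f V = shift_block ?L (shift_block r V)" for V
    have "fst (shift_block ?L (0, r)) < fst (f V)" if "V \<in> set Vs" for V
    proof -
      have "V \<in> ?R" using that Vs(1) Vs(3) by (metis in_set_conv_nth)
      then show ?thesis using IP_ofD(2)[OF IPalpha_IP_of[OF R] \<open>V \<in> ?R\<close>] r by (simp add: f_def shift_block_def)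
    qed
    moreover have "sorted_wrt (\<lambda>V V'. fst V < fst V') (map f Vs)"
      using Vs(2) unfolding sorted_wrt_map by (rule sorted_wrt_mono_rel[rotated]) (simp add: f_def shift_block_def)
    ultimately have sorted: "sorted_wrt (\<lambda>V V'. fst V < fst V') (shift_block ?L (0, r) # map f Vs)" by simp
    have elems: "(shift_block ?L (0, r) # map f Vs) ! i \<in> gadget_partition \<alpha> c (p # ps) k
        \<and> blen ((shift_block ?L (0, r) # map f Vs) ! i) = snd ((p # ps) ! i)
        \<and> div_block \<alpha> (gadget_partition \<alpha> c (p # ps) k) ((shift_block ?L (0, r) # map f Vs) ! i)
          = real (sum_list (take (Suc i) (map fst (p # ps)))) * ?q" if "i < length (p # ps)" for i
    proof (cases i)
      case 0 then show ?thesis using blocks(1,2) p by (simp add: blen_def shift_block_def)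
    next
      case (Suc j)
      then have j: "j < length ps" using that by simp
      then show ?thesis using Suc Vs(1) Vs(3)[OF j] blocks(3,4)[of "Vs ! j"] p
        by (simp add: f_def blen_shift_block algebra_simps)
    qed
    show ?case using Vs(1) sorted elems by (intro exI[of _ "shift_block ?L (0, r) # map f Vs"]) simp
  qed simp
  then obtain Vs where "length Vs = length ps" "sorted_wrt (\<lambda>V V'. fst V < fst V') Vs"
    "\<forall>i<length ps. Vs ! i \<in> gadget_partition \<alpha> c ps k \<and> blen (Vs ! i) = snd (ps ! i) \<and>
      div_block \<alpha> (gadget_partition \<alpha> c ps k) (Vs ! i) = real (sum_list (take (Suc i) (map fst ps))) * ?q"
    by blast
  then show ?thesis by (intro that[of Vs]) simp_all
qed

lemma sum_set_zip:
  fixes f :: "_ \<Rightarrow> real"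
  assumes "distinct us" "length Vs = length us"
  shows "(\<Sum>p\<in>set (zip us Vs). f p) = (\<Sum>i<length us. f (us ! i, Vs ! i))"
proof -
  have "(\<Sum>p\<in>set (zip us Vs). f p) = sum_list (map f (zip us Vs))"
    by (rule sum_list_distinct_conv_sum_set[symmetric]) (rule distinct_zipI1[OF assms(1)])
  also have "\<dots> = (\<Sum>i<length us. f (us ! i, Vs ! i))"
    using assms(2) by (simp add: sum_list_sum_nth atLeast0LessThan)
  finally show ?thesis .
qed

lemma matching_zip:
  assumes "length Vs = length us" "set us \<subseteq> \<beta>" "set Vs \<subseteq> \<gamma>"
    "sorted_wrt (\<lambda>U U'. fst U < fst U') us" "sorted_wrt (\<lambda>V V'. fst V < fst V') Vs"
  shows "matching \<beta> \<gamma> (set (zip us Vs))"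
proof -
  have "increasing_pairs (set (zip us Vs))" unfolding increasing_pairs_def
  proof (intro ballI impI)
    fix p q assume "p \<in> set (zip us Vs)" "q \<in> set (zip us Vs)" "p \<noteq> q"
    then obtain i j where ij: "i < length us" "p = (us ! i, Vs ! i)" "j < length us" "q = (us ! j, Vs ! j)"
      using assms(1) by (auto simp: in_set_zip)
    with \<open>p \<noteq> q\<close> have "i \<noteq> j" by auto
    then consider "i < j" | "j < i" by linarith
    then show "(fst (fst p) < fst (fst q) \<and> fst (snd p) < fst (snd q)) \<or>
        (fst (fst q) < fst (fst p) \<and> fst (snd q) < fst (snd p))"
      by cases (use ij assms(1) sorted_wrt_nth_less[OF assms(4)] sorted_wrt_nth_less[OF assms(5)] in auto)
  qed
  then show ?thesis using assms(2,3) by (auto simp: matching_def dest: set_zip_leftD set_zip_rightD)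
qed

lemma IP_of_sorted_blocks:
  assumes "IP_of \<beta> L" "finite F" "F \<subseteq> \<beta>"
  obtains us where "set us = F" "distinct us" "sorted_wrt (\<lambda>U V. fst U < fst V) us"
proof -
  obtain \<sigma> where \<sigma>: "correspondence \<beta> \<beta> \<sigma>" "set \<sigma> = (\<lambda>U. (U, U)) ` F"
    using matching_correspondence[OF matching_diagonal[OF assms]] .
  have "sorted_wrt (\<lambda>U V. fst U < fst V) (map fst \<sigma>)"
    using \<sigma>(1) unfolding correspondence_def sorted_wrt_map
    by (auto elim: sorted_wrt_mono_rel[rotated])
  moreover have "set (map fst \<sigma>) = F" using \<sigma>(2) by (force simp: image_image)
  ultimately show ?thesis using that sorted_wrt_irrefl_distinct by blast
qed

fun increments :: "nat \<Rightarrow> nat list \<Rightarrow> nat list" where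
  "increments p [] = []"
| "increments p (x # xs) = (x - p) # increments x xs"

lemma length_increments [simp]: "length (increments p xs) = length xs"
  by (induction p xs rule: increments.induct) auto

lemma sum_take_increments:
  "sorted (p # xs) \<Longrightarrow> i < length xs \<Longrightarrow> p + sum_list (take (Suc i) (increments p xs)) = xs ! i"
proof (induction p xs arbitrary: i rule: increments.induct)
  case (2 p x xs)
  then show ?case by (cases i) auto
qed simp

lemma sum_list_fst_snd:
  "(\<Sum>p\<leftarrow>ps. real (fst p) * m + snd p) = real (sum_list (map fst ps)) * m + sum_list (map snd ps)"
  by (induction ps) (auto simp: algebra_simps)

lemma d_alpha_gadget_partition_le:
  assumes \<alpha>: "0 < \<alpha>" "\<alpha> < 1" and \<beta>: "IP_of \<beta> L" and c: "0 < c"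
    and us: "set us \<subseteq> \<beta>" "distinct us" "sorted_wrt (\<lambda>U V. fst U < fst V) us"
    and ps: "length ps = length us" "\<forall>p\<in>set ps. 0 < snd p"
    and err: "(\<Sum>i<length us. \<bar>blen (us ! i) - snd (ps ! i)\<bar>) \<le> \<eta>"
    and len: "L - (\<Sum>i<length us. blen (us ! i)) \<le> \<epsilon> - \<eta>"
      "real (sum_list (map fst ps) + k) * (c * gadget_total \<alpha>) \<le> \<epsilon> - \<eta>"
    and div: "\<bar>div_inf \<alpha> \<beta> - real (sum_list (map fst ps) + k) * (c powr \<alpha> * Gamma (1 - \<alpha>))\<bar> \<le> \<epsilon>"
      "\<And>i. i < length us \<Longrightarrow> \<bar>div_block \<alpha> \<beta> (us ! i)
        - real (sum_list (take (Suc i) (map fst ps))) * (c powr \<alpha> * Gamma (1 - \<alpha>))\<bar> \<le> \<epsilon>"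
  shows "d_alpha \<alpha> \<beta> (gadget_partition \<alpha> c ps k) \<le> \<epsilon>"
proof -
  let ?\<gamma> = "gadget_partition \<alpha> c ps k"
  obtain Vs where Vs: "length Vs = length ps" "sorted_wrt (\<lambda>V V'. fst V < fst V') Vs"
    "\<And>i. i < length ps \<Longrightarrow> Vs ! i \<in> ?\<gamma>" "\<And>i. i < length ps \<Longrightarrow> blen (Vs ! i) = snd (ps ! i)"
    "\<And>i. i < length ps \<Longrightarrow> div_block \<alpha> ?\<gamma> (Vs ! i)
       = real (sum_list (take (Suc i) (map fst ps))) * (c powr \<alpha> * Gamma (1 - \<alpha>))"
    using gadget_partition_marked_blocks[OF \<alpha> c ps(2)] by blast
  define S where "S = set (zip us Vs)"
  have "set Vs \<subseteq> ?\<gamma>"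
  proof
    fix V assume "V \<in> set Vs"
    then obtain i where "i < length Vs" "V = Vs ! i" by (metis in_set_conv_nth)
    then show "V \<in> ?\<gamma>" using Vs(1,3) by simp
  qed
  then have S: "matching \<beta> ?\<gamma> S"
    unfolding S_def using Vs(1,2) ps(1) us by (intro matching_zip) auto
  have sums: "(\<Sum>p\<in>S. f p) = (\<Sum>i<length us. f (us ! i, Vs ! i))" for f :: "_ \<Rightarrow> real"
    unfolding S_def using sum_set_zip[OF us(2)] Vs(1) ps(1) by simp
  have abs_sum: "(\<Sum>p\<in>S. \<bar>blen (fst p) - blen (snd p)\<bar>) \<le> \<eta>"
    using err Vs(4) ps(1) by (simp add: sums)
  have "(\<Sum>p\<in>S. blen (snd p)) = sum_list (map snd ps)"
    using Vs(4) ps(1) by (simp add: sums sum_list_sum_nth atLeast0LessThan)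
  then have "length_defect (IPlen ?\<gamma>) (converse S) \<le> \<epsilon>"
    unfolding length_defect_converse IPlen_gadget_partition[OF \<alpha> c ps(2)] sum_list_fst_snd
    using abs_sum len(2) by (simp add: algebra_simps)
  moreover have "length_defect (IPlen \<beta>) S \<le> \<epsilon>"
    unfolding length_defect_def IPlen_eqI[OF \<beta>] using abs_sum len(1) by (simp add: sums)
  moreover have "\<bar>div_block \<alpha> \<beta> (fst p) - div_block \<alpha> ?\<gamma> (snd p)\<bar> \<le> \<epsilon>" if p: "p \<in> S" for p
  proof -
    obtain i where "i < length us" "p = (us ! i, Vs ! i)"
      using p Vs(1) ps(1) by (auto simp: S_def in_set_zip)
    then show ?thesis using div(2) Vs(5) ps(1) by simp
  qed
  ultimately have "matching_distortion \<alpha> \<beta> ?\<gamma> S \<le> \<epsilon>"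
    using S div(1) div_inf_gadget_partition[OF \<alpha> c ps(2)]
    by (intro matching_distortion_le) (auto simp: matching_def)
  then show ?thesis using d_alpha_le_matching_distortion[OF S, where \<alpha> = \<alpha>] by simp
qed

lemma exists_quantized_increments:
  fixes D :: "nat \<Rightarrow> real"
  assumes mono: "\<And>i j. i \<le> j \<Longrightarrow> j \<le> n \<Longrightarrow> D i \<le> D j" and q: "0 < q"
  obtains ks k where "length ks = n" "\<And>i. i < n \<Longrightarrow> sum_list (take (Suc i) ks) = nat \<lfloor>D i / q\<rfloor>"
    "sum_list ks + k = nat \<lfloor>D n / q\<rfloor>"
proof -
  define xs where "xs = map (\<lambda>i. nat \<lfloor>D i / q\<rfloor>) [0..<Suc n]"
  have "sorted (0 # xs)"
    unfolding xs_def sorted_iff_nth_mono using mono q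
    by (auto intro!: nat_mono floor_mono divide_right_mono simp: nth_Cons' simp del: upt_Suc)
  then have sums: "sum_list (take (Suc i) (increments 0 xs)) = nat \<lfloor>D i / q\<rfloor>" if "i \<le> n" for i
    using sum_take_increments[of 0 xs i] that by (simp add: xs_def del: upt_Suc)
  define ks where "ks = take n (increments 0 xs)"
  have "take (Suc n) (increments 0 xs) = ks @ [increments 0 xs ! n]"
    unfolding ks_def by (rule take_Suc_conv_app_nth) (simp add: xs_def)
  then have "sum_list ks + increments 0 xs ! n = nat \<lfloor>D n / q\<rfloor>" using sums[of n] by simp
  moreover have "length ks = n" by (simp add: ks_def xs_def)
  moreover have "sum_list (take (Suc i) ks) = nat \<lfloor>D i / q\<rfloor>" if "i < n" for i
    using sums[of i] that by (simp add: ks_def min_def)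
  ultimately show ?thesis using that by blast
qed

lemma nat_floor_divide_mult_bounds:
  fixes D q :: real
  assumes "0 \<le> D" "0 < q"
  shows "real (nat \<lfloor>D / q\<rfloor>) * q \<le> D" "D < real (nat \<lfloor>D / q\<rfloor>) * q + q"
proof -
  have e: "real (nat \<lfloor>D / q\<rfloor>) = real_of_int \<lfloor>D / q\<rfloor>" using assms by simp
  have "real_of_int \<lfloor>D / q\<rfloor> \<le> D / q" by (rule of_int_floor_le)
  then show "real (nat \<lfloor>D / q\<rfloor>) * q \<le> D" unfolding e using pos_le_divide_eq[OF assms(2)] by blast
  have "D / q < real_of_int \<lfloor>D / q\<rfloor> + 1" by (rule real_of_int_floor_add_one_gt)
  then have "D < (real_of_int \<lfloor>D / q\<rfloor> + 1) * q" using pos_divide_less_eq[OF assms(2)] by blast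
  then show "D < real (nat \<lfloor>D / q\<rfloor>) * q + q" unfolding e by (simp add: algebra_simps)
qed

lemma exists_rat_small_scale:
  fixes \<alpha> A B u v :: real
  assumes \<alpha>: "0 < \<alpha>" "\<alpha> < 1" and uv: "0 < u" "0 < v"
  obtains c where "c \<in> \<rat>" "0 < c" "c powr \<alpha> * A < u" "B * c powr (1 - \<alpha>) < v"
proof -
  have "eventually (\<lambda>c. c powr \<alpha> * A < u) (at_right 0)"
    using order_tendstoD(2)[OF tendsto_mult_left_zero[OF tendsto_powr_at_right_0[OF \<alpha>(1)]] uv(1)] .
  moreover have "eventually (\<lambda>c. B * c powr (1 - \<alpha>) < v) (at_right 0)"
    using order_tendstoD(2)[OF tendsto_mult_right_zero[OF tendsto_powr_at_right_0] uv(2)] \<alpha>(2) by simp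
  ultimately have "eventually (\<lambda>c. c powr \<alpha> * A < u \<and> B * c powr (1 - \<alpha>) < v) (at_right (0::real))"
    by (rule eventually_conj)
  then obtain b where b: "0 < b" "\<And>y. 0 < y \<Longrightarrow> y < b \<Longrightarrow> y powr \<alpha> * A < u \<and> B * y powr (1 - \<alpha>) < v"
    unfolding eventually_at_right_field by blast
  obtain c where "c \<in> \<rat>" "0 < c" "c < b" using Rats_dense_in_real[OF b(1)] by blast
  then show ?thesis using that b(2)[of c] by blast
qed

lemma exists_rat_near:
  fixes b d :: real
  assumes "0 < b" "0 < d"
  obtains r where "r \<in> \<rat>" "0 < r" "\<bar>r - b\<bar> < d"
proof -
  have "max 0 (b - d) < b + d" using assms by simp
  then obtain r where "r \<in> \<rat>" "max 0 (b - d) < r" "r < b + d" using Rats_dense_in_real by blast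
  then show ?thesis using that by auto
qed

lemma exists_rat_approx:
  fixes n :: nat and b :: "nat \<Rightarrow> real"
  assumes "\<And>i. i < n \<Longrightarrow> 0 < b i" "0 < \<eta>"
  obtains r where "\<And>i. i < n \<Longrightarrow> r i \<in> \<rat> \<and> 0 < r i" "(\<Sum>i<n. \<bar>b i - r i\<bar>) \<le> \<eta>"
proof -
  define d where "d = \<eta> / (real n + 1)"
  have d: "0 < d" using assms(2) by (simp add: d_def)
  have "\<exists>x. i < n \<longrightarrow> x \<in> \<rat> \<and> 0 < x \<and> \<bar>x - b i\<bar> < d" for i
  proof (cases "i < n")
    case True
    obtain x where "x \<in> \<rat>" "0 < x" "\<bar>x - b i\<bar> < d" using exists_rat_near[OF assms(1)[OF True] d] .
    then show ?thesis by blast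
  qed simp
  then obtain r where r: "\<And>i. i < n \<Longrightarrow> r i \<in> \<rat> \<and> 0 < r i \<and> \<bar>r i - b i\<bar> < d" by metis
  have "(\<Sum>i<n. \<bar>b i - r i\<bar>) \<le> (\<Sum>i<n. d)"
    using r by (intro sum_mono) (simp add: abs_minus_commute less_imp_le)
  also have "\<dots> \<le> \<eta>" using assms(2) by (simp add: d_def field_simps)
  finally show ?thesis using that r by blast
qed

lemma nat_floor_quantum_mass_le:
  assumes "0 \<le> D" "0 < c" "0 < \<Gamma>" "0 \<le> M"
  shows "real (nat \<lfloor>D / (c powr \<alpha> * \<Gamma>)\<rfloor>) * (c * M) \<le> D * M / \<Gamma> * c powr (1 - \<alpha>)"
proof -
  let ?q = "c powr \<alpha> * \<Gamma>" and ?K = "real (nat \<lfloor>D / (c powr \<alpha> * \<Gamma>)\<rfloor>)"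
  have q: "0 < ?q" using assms by simp
  have "?K * (c * M) = ?K * ?q * (M / \<Gamma> * (c / c powr \<alpha>))"
    using assms(2,3) by (simp add: field_simps)
  also have "\<dots> \<le> D * (M / \<Gamma> * (c / c powr \<alpha>))"
    using nat_floor_divide_mult_bounds(1)[OF assms(1) q] assms by (intro mult_right_mono) auto
  also have "\<dots> = D * M / \<Gamma> * c powr (1 - \<alpha>)" using assms(2) by (simp add: powr_diff)
  finally show ?thesis .
qed

text \<open>Approximate \<open>\<beta>\<close> by finitely many of its blocks with rational lengths, and reproduce
  their diversities, up to a quantum \<open>q = c powr \<alpha> * Gamma (1 - \<alpha>)\<close>, with scaled gadgets placed in
  between; their total length is of order \<open>c powr (1 - \<alpha>)\<close>, so small \<open>c\<close> makes both errors small.\<close>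

lemma gadget_partition_dense:
  assumes \<alpha>: "0 < \<alpha>" "\<alpha> < 1" and \<beta>: "\<beta> \<in> IPalpha \<alpha>" and \<epsilon>: "0 < \<epsilon>"
  obtains c ps k where "c \<in> \<rat>" "0 < c" "\<forall>p\<in>set ps. snd p \<in> \<rat> \<and> 0 < snd p"
    "d_alpha \<alpha> \<beta> (gadget_partition \<alpha> c ps k) < \<epsilon>"
proof -
  define L where "L = IPlen \<beta>"
  have IP\<beta>: "IP_of \<beta> L" and div\<beta>: "has_diversity \<alpha> \<beta>"
    unfolding L_def using IPalpha_IP_of[OF \<beta>] IPalpha_has_diversity[OF \<beta>] by auto
  define \<Gamma> where "\<Gamma> = Gamma (1 - \<alpha>)"
  have \<Gamma>: "0 < \<Gamma>" unfolding \<Gamma>_def using \<alpha>(2) by (intro Gamma_real_pos) simp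
  define M where "M = gadget_total \<alpha>"
  have M: "0 < M" unfolding M_def by (rule gadget_total_pos[OF \<alpha>])
  obtain F where F: "finite F" "F \<subseteq> \<beta>" "L - \<epsilon> / 4 < (\<Sum>U\<in>F. blen U)"
    using IP_of_finite_blocks_cover[OF IP\<beta>, of "\<epsilon> / 4"] \<epsilon> by auto
  obtain us where us: "set us = F" "distinct us" "sorted_wrt (\<lambda>U V. fst U < fst V) us"
    using IP_of_sorted_blocks[OF IP\<beta> F(1,2)] .
  define n where "n = length us"
  have us_in: "us ! i \<in> \<beta>" if "i < n" for i using that F(2) us(1) unfolding n_def by auto
  define D where "D i = (if i < n then div_block \<alpha> \<beta> (us ! i) else div_inf \<alpha> \<beta>)" for i
  have us_sub: "set us \<subseteq> \<beta>" using us(1) F(2) by simp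
  have D0: "0 \<le> D i" for i
    using diversity_profile(1)[OF IP\<beta> div\<beta> \<alpha>(2) us_sub us(3), of i] by (simp add: D_def n_def)
  have D_mono: "D i \<le> D j" if "i \<le> j" "j \<le> n" for i j
    using diversity_profile(2)[OF IP\<beta> div\<beta> \<alpha>(2) us_sub us(3), of i j] that by (simp add: D_def n_def)
  obtain c where c: "c \<in> \<rat>" "0 < c" "c powr \<alpha> * \<Gamma> < \<epsilon> / 2" "D n * M / \<Gamma> * c powr (1 - \<alpha>) < \<epsilon> / 4"
    using exists_rat_small_scale[where A = \<Gamma> and B = "D n * M / \<Gamma>" and u = "\<epsilon> / 2"
        and v = "\<epsilon> / 4", OF \<alpha>] \<epsilon>
    by auto
  define q where "q = c powr \<alpha> * \<Gamma>"
  have q: "0 < q" unfolding q_def using c(2) \<Gamma> by simp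
  obtain ks k where ks: "length ks = n" "\<And>i. i < n \<Longrightarrow> sum_list (take (Suc i) ks) = nat \<lfloor>D i / q\<rfloor>"
    "sum_list ks + k = nat \<lfloor>D n / q\<rfloor>"
    using exists_quantized_increments[where D = D and n = n, OF D_mono q] by blast
  obtain rf where rf: "\<And>i. i < n \<Longrightarrow> rf i \<in> \<rat> \<and> 0 < rf i"
    "(\<Sum>i<n. \<bar>blen (us ! i) - rf i\<bar>) \<le> \<epsilon> / 4"
    using exists_rat_approx[of n "\<lambda>i. blen (us ! i)" "\<epsilon> / 4"] IP_of_blen_pos[OF IP\<beta> us_in] \<epsilon>
    by auto
  define ps where "ps = zip ks (map rf [0..<n])"
  have ps: "length ps = n" "\<And>i. i < n \<Longrightarrow> ps ! i = (ks ! i, rf i)" "map fst ps = ks"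
    using ks(1) by (simp_all add: ps_def)
  have ps_rat: "\<forall>p\<in>set ps. snd p \<in> \<rat> \<and> 0 < snd p"
    using rf by (auto simp: ps_def set_zip)
  have "d_alpha \<alpha> \<beta> (gadget_partition \<alpha> c ps k) \<le> \<epsilon> / 2"
  proof (rule d_alpha_gadget_partition_le[OF \<alpha> IP\<beta> c(2) _ us(2,3), where \<eta> = "\<epsilon> / 4"])
    show "set us \<subseteq> \<beta>" by (rule us_sub)
    show "length ps = length us" "\<forall>p\<in>set ps. 0 < snd p" using ps(1) ps_rat by (simp_all add: n_def)
    have "(\<Sum>i<n. \<bar>blen (us ! i) - snd (ps ! i)\<bar>) = (\<Sum>i<n. \<bar>blen (us ! i) - rf i\<bar>)"
      by (rule sum.cong) (simp_all add: ps(2))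
    then show "(\<Sum>i<length us. \<bar>blen (us ! i) - snd (ps ! i)\<bar>) \<le> \<epsilon> / 4"
      using rf(2) by (simp add: n_def)
    have "(\<Sum>i<length us. blen (us ! i)) = (\<Sum>U\<in>F. blen U)"
      using sum_list_distinct_conv_sum_set[OF us(2), of blen] us(1) by (simp add: sum_list_sum_nth atLeast0LessThan)
    then show "L - (\<Sum>i<length us. blen (us ! i)) \<le> \<epsilon> / 2 - \<epsilon> / 4" using F(3) by simp
    have "real (nat \<lfloor>D n / q\<rfloor>) * (c * M) < \<epsilon> / 4"
      using nat_floor_quantum_mass_le[OF D0 c(2) \<Gamma> less_imp_le[OF M], of n \<alpha>] c(4) unfolding q_def
      by linarith
    then show "real (sum_list (map fst ps) + k) * (c * gadget_total \<alpha>) \<le> \<epsilon> / 2 - \<epsilon> / 4"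
      using ks(3) ps(3) by (simp add: M_def)
    have err: "\<bar>D i - real (nat \<lfloor>D i / q\<rfloor>) * q\<bar> \<le> \<epsilon> / 2" for i
      using nat_floor_divide_mult_bounds[OF D0 q, of i] c(3) by (simp add: q_def abs_le_iff)
    show "\<bar>div_inf \<alpha> \<beta> - real (sum_list (map fst ps) + k) * (c powr \<alpha> * Gamma (1 - \<alpha>))\<bar> \<le> \<epsilon> / 2"
      using err[of n] ks(3) ps(3) by (simp add: D_def q_def \<Gamma>_def)
    show "\<bar>div_block \<alpha> \<beta> (us ! i) - real (sum_list (take (Suc i) (map fst ps))) * (c powr \<alpha> * Gamma (1 - \<alpha>))\<bar>
        \<le> \<epsilon> / 2" if "i < length us" for i
      using err[of i] ks(2)[of i] ps(3) that by (simp add: D_def q_def \<Gamma>_def n_def)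
  qed
  then have "d_alpha \<alpha> \<beta> (gadget_partition \<alpha> c ps k) < \<epsilon>" using \<epsilon> by linarith
  then show ?thesis using that c(1,2) ps_rat by blast
qed

definition rational_gadget_partitions :: "real \<Rightarrow> (real \<times> real) set set" where
  "rational_gadget_partitions \<alpha> = (\<lambda>(c, ps, k). gadget_partition \<alpha> c ps k) `
     ((\<rat> \<inter> {0<..}) \<times> lists (UNIV \<times> (\<rat> \<inter> {0<..})) \<times> UNIV)"

lemma countable_rational_gadget_partitions: "countable (rational_gadget_partitions \<alpha>)"
  unfolding rational_gadget_partitions_def using countable_rat by (intro countable_image countable_SIGMA) auto

lemma IPalpha_separable:
  assumes \<alpha>: "0 < \<alpha>" "\<alpha> < 1"
  shows "separable_space (Metric_space.mtopology (IPalpha \<alpha>) (d_alpha \<alpha>))"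
proof -
  interpret M: Metric_space "IPalpha \<alpha>" "d_alpha \<alpha>" by (rule IPalpha_metric)
  have sub: "rational_gadget_partitions \<alpha> \<subseteq> IPalpha \<alpha>"
    unfolding rational_gadget_partitions_def using IPalpha_gadget_partition[OF \<alpha>] by force
  have "\<exists>\<gamma>\<in>rational_gadget_partitions \<alpha>. \<gamma> \<in> M.mball \<beta> \<epsilon>" if \<beta>: "\<beta> \<in> IPalpha \<alpha>" and "0 < \<epsilon>" for \<beta> \<epsilon>
  proof -
    obtain c ps k where c: "c \<in> \<rat>" "0 < c" and ps: "\<forall>p\<in>set ps. snd p \<in> \<rat> \<and> 0 < snd p"
      and d: "d_alpha \<alpha> \<beta> (gadget_partition \<alpha> c ps k) < \<epsilon>"
      using gadget_partition_dense[OF \<alpha> \<beta> \<open>0 < \<epsilon>\<close>] .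
    have "gadget_partition \<alpha> c ps k \<in> rational_gadget_partitions \<alpha>"
      unfolding rational_gadget_partitions_def using c ps
      by (intro image_eqI[of _ _ "(c, ps, k)"]) (auto simp: mem_Times_iff)
    then show ?thesis using sub \<beta> d by auto
  qed
  then have "M.mtopology closure_of rational_gadget_partitions \<alpha> = IPalpha \<alpha>"
    unfolding M.metric_closure_of by auto
  then show ?thesis
    unfolding separable_space_def using countable_rational_gadget_partitions sub by auto
qed

theorem lemma3p6:
  fixes \<alpha> :: real
  assumes "0 < \<alpha>" and "\<alpha> < 1"
  shows "Metric_space (IPalpha \<alpha>) (d_alpha \<alpha>)
    \<and> path_connected_space (Metric_space.mtopology (IPalpha \<alpha>) (d_alpha \<alpha>))
    \<and> separable_space (Metric_space.mtopology (IPalpha \<alpha>) (d_alpha \<alpha>))"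
  using IPalpha_metric IPalpha_path_connected[OF assms] IPalpha_separable[OF assms] by (intro conjI)

end
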